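(* Let $E$ be a nonzero reflexive real Banach space, let $f,g\colon E\times E^*\to\,]{-}\infty,\infty]$ be proper convex lower semicontinuous BC--functions such that $\bigcup_{\lambda>0}\lambda[\pi_1\mathrm{dom}\,f-\pi_1\mathrm{dom}\,g]$ is a closed linear subspace of $E$, and for $(x,x^* )\in E\times E^*$ let $h(x,x^* ):=\inf\{f(x,s^* )+g(x,t^* )\colon s^*,t^*\in E^*,\ s^*+t^*=x^*\}$. Then $h$ is a BC--function, ${\cal P}_q(h^@)=\{(x,s^*+t^* )\colon (x,s^* )\in{\cal P}_q(f^@),\ (x,t^* )\in{\cal P}_q(g^@)\}$, and ${\cal P}_q(h)=\{(x,s^*+t^* )\colon (x,s^* )\in{\cal P}_q(f),\ (x,t^* )\in{\cal P}_q(g)\}$.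
   Context: $\pi_1(x,x^* ):=x$; $\mathrm{dom}\,f:=\{(x,x^* )\colon f(x,x^* )\in\mathbb{R}\}$. On $E\times E^*$ set $\lfloor(x,x^* ),(y,y^* )\rfloor:=\langle x,y^*\rangle+\langle y,x^*\rangle$ and $q(x,x^* ):=\langle x,x^*\rangle$. For a function $k$ on $E\times E^*$, $k^@(y,y^* ):=\sup_{(x,x^* )}[\lfloor(x,x^* ),(y,y^* )\rfloor-k(x,x^* )]$; a BC--function is a proper convex $k$ with $k^@\ge k\ge q$ on $E\times E^*$; for $k\ge q$, ${\cal P}_q(k):=\{(x,x^* )\colon k(x,x^* )=\langle x,x^*\rangle\}$. *)

theory Defs
  imports "HOL-Analysis.Analysis"
begin

(* E is a type of class banach; E* is the type of bounded linear functionals;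
   functions into ]-inf,inf] are ereal-valued. *)

definition reflexive_space :: "'a::banach itself \<Rightarrow> bool" where
  "reflexive_space _ \<longleftrightarrow>
     (\<forall>\<Phi> :: ('a \<Rightarrow>\<^sub>L real) \<Rightarrow>\<^sub>L real. \<exists>x::'a. \<forall>xs. blinfun_apply \<Phi> xs = blinfun_apply xs x)"

definition proper_fun :: "('b \<Rightarrow> ereal) \<Rightarrow> bool" where
  "proper_fun k \<longleftrightarrow> (\<forall>z. k z \<noteq> -\<infinity>) \<and> (\<exists>z. k z \<noteq> \<infinity>)"

definition convex_fun :: "('b::real_vector \<Rightarrow> ereal) \<Rightarrow> bool" where
  "convex_fun k \<longleftrightarrow> (\<forall>z w t. 0 < t \<longrightarrow> t < 1 \<longrightarrow>
      k ((1 - t) *\<^sub>R z + t *\<^sub>R w) \<le> ereal (1 - t) * k z + ereal t * k w)"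

definition lsc_fun :: "('b::topological_space \<Rightarrow> ereal) \<Rightarrow> bool" where
  "lsc_fun k \<longleftrightarrow> (\<forall>c::real. closed {z. k z \<le> ereal c})"

definition qform :: "'a::banach \<times> ('a \<Rightarrow>\<^sub>L real) \<Rightarrow> real" where
  "qform p = blinfun_apply (snd p) (fst p)"

definition bpair :: "'a::banach \<times> ('a \<Rightarrow>\<^sub>L real) \<Rightarrow> 'a \<times> ('a \<Rightarrow>\<^sub>L real) \<Rightarrow> real" where
  "bpair p r = blinfun_apply (snd r) (fst p) + blinfun_apply (snd p) (fst r)"

definition fconj :: "('a::banach \<times> ('a \<Rightarrow>\<^sub>L real) \<Rightarrow> ereal) \<Rightarrow> 'a \<times> ('a \<Rightarrow>\<^sub>L real) \<Rightarrow> ereal" where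
  "fconj k r = (SUP p. ereal (bpair p r) - k p)"

definition BC_fun :: "('a::banach \<times> ('a \<Rightarrow>\<^sub>L real) \<Rightarrow> ereal) \<Rightarrow> bool" where
  "BC_fun k \<longleftrightarrow> proper_fun k \<and> convex_fun k \<and>
     (\<forall>p. fconj k p \<ge> k p \<and> k p \<ge> ereal (qform p))"

definition Pq :: "('a::banach \<times> ('a \<Rightarrow>\<^sub>L real) \<Rightarrow> ereal) \<Rightarrow> ('a \<times> ('a \<Rightarrow>\<^sub>L real)) set" where
  "Pq k = {p. k p = ereal (qform p)}"

definition fdom :: "('b \<Rightarrow> ereal) \<Rightarrow> 'b set" where
  "fdom k = {p. k p \<noteq> \<infinity> \<and> k p \<noteq> -\<infinity>}"

end

theory Submission
  imports Defs
begin

text \<open>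
  Fix \<open>(y, y\<^sup>*)\<close> with \<open>M = h\<^sup>@(y, y\<^sup>*)\<close> finite. The convex function
  \<open>\<psi>((x,s),(x',t)) = M + f(x,s) + g(x',t) - s(y) - t(y) - y\<^sup>*(x')\<close> on \<open>dom f \<times> dom g\<close>
  is nonnegative where \<open>x = x'\<close>, since there it compares \<open>M\<close> with one term of the supremum
  defining \<open>h\<^sup>@(y, y\<^sup>*)\<close>. The constraint qualification (the cone spanned by
  \<open>\<pi>\<^sub>1 dom f - \<pi>\<^sub>1 dom g\<close> is a closed subspace) gives, through Baire's theorem and the
  open-mapping iteration, a bound \<open>\<psi> \<ge> -K \<parallel>x - x'\<parallel>\<close>; Hahn--Banach then yields a continuous
  functional \<open>u\<close> with \<open>u(x - x') \<le> \<psi>\<close>, and separating the variables gives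
  \<open>f\<^sup>@(y, u) + g\<^sup>@(y, y\<^sup>* - u) \<le> M\<close>. The reverse inequality holds for every \<open>u\<close>, so
  \<open>h\<^sup>@(y, y\<^sup>*)\<close> is an exact infimal convolution of \<open>f\<^sup>@\<close> and \<open>g\<^sup>@\<close> in the second variable.
  This formula gives \<open>h \<le> h\<^sup>@\<close> and, as \<open>f\<^sup>@ \<ge> q\<close> and \<open>g\<^sup>@ \<ge> q\<close>, the description of
  \<open>P\<^sub>q(h\<^sup>@)\<close>. Finally \<open>P\<^sub>q(h) \<subseteq> P\<^sub>q(h\<^sup>@)\<close> because a convex \<open>k \<ge> q\<close> that touches \<open>q\<close>
  at \<open>p\<close> satisfies \<open>k\<^sup>@(p) \<le> q(p)\<close>.
\<close>

section \<open>Hahn--Banach for sublinear functionals\<close>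

text \<open>Linear functionals on subspaces dominated by \<open>p\<close>, represented by their graphs so that
  Zorn's lemma can be applied to set inclusion.\<close>

definition dominated_linear_graph :: "('a::real_vector \<Rightarrow> real) \<Rightarrow> ('a \<times> real) set \<Rightarrow> bool" where
  "dominated_linear_graph p G \<longleftrightarrow> G \<noteq> {} \<and>
     (\<forall>x a y b. (x,a) \<in> G \<longrightarrow> (y,b) \<in> G \<longrightarrow> (x+y, a+b) \<in> G) \<and>
     (\<forall>x a c. (x,a) \<in> G \<longrightarrow> (c *\<^sub>R x, c * a) \<in> G) \<and>
     (\<forall>x a b. (x,a) \<in> G \<longrightarrow> (x,b) \<in> G \<longrightarrow> a = b) \<and>
     (\<forall>x a. (x,a) \<in> G \<longrightarrow> a \<le> p x)"

lemma dominated_linear_graphD: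
  assumes "dominated_linear_graph p G"
  shows "G \<noteq> {}"
    and "(x,a) \<in> G \<Longrightarrow> (y,b) \<in> G \<Longrightarrow> (x+y, a+b) \<in> G"
    and "(x,a) \<in> G \<Longrightarrow> (c *\<^sub>R x, c * a) \<in> G"
    and "(x,a) \<in> G \<Longrightarrow> (x,b) \<in> G \<Longrightarrow> a = b"
    and "(x,a) \<in> G \<Longrightarrow> a \<le> p x"
  using assms unfolding dominated_linear_graph_def by blast+

lemma dominated_linear_graph_Union_chain:
  assumes C: "C \<in> chains {G. dominated_linear_graph p G}" and "C \<noteq> {}"
  shows "dominated_linear_graph p (\<Union>C)"
proof -
  have CA: "dominated_linear_graph p G" if "G \<in> C" for G
    using C that by (auto simp: chains_def)
  have chain_pair: "\<exists>G\<in>C. u \<in> G \<and> v \<in> G" if uv: "u \<in> \<Union>C" "v \<in> \<Union>C" for u v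
  proof -
    obtain G H where "G \<in> C" "H \<in> C" "u \<in> G" "v \<in> H" using uv by blast
    moreover have "G \<subseteq> H \<or> H \<subseteq> G"
      using C \<open>G \<in> C\<close> \<open>H \<in> C\<close> by (auto simp: chains_def chain_subset_def)
    ultimately show ?thesis by blast
  qed
  show ?thesis
    unfolding dominated_linear_graph_def
  proof (intro conjI allI impI)
    obtain G where "G \<in> C" using \<open>C \<noteq> {}\<close> by blast
    then show "\<Union>C \<noteq> {}" using dominated_linear_graphD(1)[OF CA] by blast
  next
    fix x a y b assume "(x,a) \<in> \<Union>C" "(y,b) \<in> \<Union>C"
    then obtain G where "G \<in> C" "(x,a) \<in> G" "(y,b) \<in> G" using chain_pair by blast
    then show "(x+y, a+b) \<in> \<Union>C" using dominated_linear_graphD(2)[OF CA] by blast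
  next
    fix x a c assume "(x,a) \<in> \<Union>C"
    then obtain G where "G \<in> C" "(x,a) \<in> G" by blast
    then show "(c *\<^sub>R x, c * a) \<in> \<Union>C" using dominated_linear_graphD(3)[OF CA] by blast
  next
    fix x a b assume "(x,a) \<in> \<Union>C" "(x,b) \<in> \<Union>C"
    then obtain G where "G \<in> C" "(x,a) \<in> G" "(x,b) \<in> G" using chain_pair by blast
    then show "a = b" using dominated_linear_graphD(4)[OF CA] by blast
  next
    fix x a assume "(x,a) \<in> \<Union>C"
    then obtain G where "G \<in> C" "(x,a) \<in> G" by blast
    then show "a \<le> p x" using dominated_linear_graphD(5)[OF CA] by blast
  qed
qed

text \<open>The one-dimensional extension step: the admissible values at the new point \<open>x\<^sub>0\<close>
  form a nonempty interval because \<open>p\<close> is subadditive.\<close>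

lemma dominated_linear_graph_extension_value:
  assumes sub: "\<And>x y. p (x + y) \<le> p x + p y"
    and M: "dominated_linear_graph p M"
  shows "\<exists>\<alpha>. (\<forall>x a. (x,a) \<in> M \<longrightarrow> a - p (x - x0) \<le> \<alpha>) \<and>
              (\<forall>y b. (y,b) \<in> M \<longrightarrow> \<alpha> \<le> p (y + x0) - b)"
proof -
  define S where "S = {a - p (x - x0) | x a. (x,a) \<in> M}"
  have bound: "s \<le> p (y + x0) - b" if "s \<in> S" "(y,b) \<in> M" for s y b
  proof -
    obtain x a where s: "s = a - p (x - x0)" "(x,a) \<in> M" using \<open>s \<in> S\<close> by (auto simp: S_def)
    have "a + b \<le> p (x + y)"
    using dominated_linear_graphD(5,2)[OF M] s(2) \<open>(y,b) \<in> M\<close> by blast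
    also have "x + y = (x - x0) + (y + x0)" by simp
    also have "p \<dots> \<le> p (x - x0) + p (y + x0)" by (rule sub)
    finally show ?thesis using s by simp
  qed
  obtain y b where yb: "(y,b) \<in> M" using dominated_linear_graphD(1)[OF M] by auto
  have "S \<noteq> {}" using yb by (auto simp: S_def)
  moreover have "bdd_above S" using bound[OF _ yb] by (rule bdd_aboveI)
  ultimately have "a - p (x - x0) \<le> Sup S" if "(x,a) \<in> M" for x a
    using that by (intro cSup_upper) (auto simp: S_def)
  moreover have "Sup S \<le> p (y + x0) - b" if "(y,b) \<in> M" for y b
    using \<open>S \<noteq> {}\<close> bound[OF _ that] by (rule cSup_least)
  ultimately show ?thesis by blast
qed

definition graph_adjoin :: "('a::real_vector \<times> real) set \<Rightarrow> 'a \<Rightarrow> real \<Rightarrow> ('a \<times> real) set" where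
  "graph_adjoin M x0 \<alpha> = {(x + t *\<^sub>R x0, a + t * \<alpha>) | x a t. (x,a) \<in> M}"

lemma dominated_linear_graph_adjoin_le:
  assumes hom: "\<And>c x. c \<ge> 0 \<Longrightarrow> p (c *\<^sub>R x) = c * p x"
    and M: "dominated_linear_graph p M"
    and al1: "\<And>x a. (x,a) \<in> M \<Longrightarrow> a - p (x - x0) \<le> \<alpha>"
    and al2: "\<And>y b. (y,b) \<in> M \<Longrightarrow> \<alpha> \<le> p (y + x0) - b"
    and xa: "(x,a) \<in> M"
  shows "a + t * \<alpha> \<le> p (x + t *\<^sub>R x0)"
proof -
  consider "t = 0" | "t > 0" | "t < 0" by linarith
  then show ?thesis
  proof cases
    case 1 then show ?thesis using dominated_linear_graphD(5)[OF M xa] by simp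
  next
    case 2
    have "t * \<alpha> \<le> t * (p (inverse t *\<^sub>R x + x0) - inverse t * a)"
      using al2[OF dominated_linear_graphD(3)[OF M xa]] 2 by (simp add: mult_left_mono)
    also have "\<dots> = p (t *\<^sub>R (inverse t *\<^sub>R x + x0)) - a"
      using 2 by (simp add: hom right_diff_distrib)
    finally show ?thesis using 2 by (simp add: scaleR_add_right)
  next
    case 3
    define s where "s = - t"
    have s: "s > 0" using 3 by (simp add: s_def)
    have "s * (inverse s * a - p (inverse s *\<^sub>R x - x0)) \<le> s * \<alpha>"
      using al1[OF dominated_linear_graphD(3)[OF M xa]] s by (simp add: mult_left_mono)
    also have "s * (inverse s * a - p (inverse s *\<^sub>R x - x0)) = a - p (s *\<^sub>R (inverse s *\<^sub>R x - x0))"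
      using s by (simp add: hom right_diff_distrib)
    also have "s *\<^sub>R (inverse s *\<^sub>R x - x0) = x + t *\<^sub>R x0" using s by (simp add: s_def scaleR_diff_right)
    finally show ?thesis by (simp add: s_def)
  qed
qed

lemma dominated_linear_graph_adjoin_unique:
  assumes M: "dominated_linear_graph p M" and x0: "\<And>a. (x0,a) \<notin> M"
    and xa: "(x,a) \<in> M" and xa': "(x',a') \<in> M" and eq: "x + t *\<^sub>R x0 = x' + t' *\<^sub>R x0"
  shows "t = t' \<and> x = x' \<and> a = a'"
proof -
  have "t = t'"
  proof (rule ccontr)
    assume "t \<noteq> t'"
    have "(x + (-1) *\<^sub>R x', a + (-1) * a') \<in> M"
      using dominated_linear_graphD(2,3)[OF M] xa xa' by blast
    from dominated_linear_graphD(3)[OF M this, of "inverse (t' - t)"]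
    have "(inverse (t' - t) *\<^sub>R (x + (-1) *\<^sub>R x'), inverse (t' - t) * (a + (-1) * a')) \<in> M" .
    moreover have "x + (-1) *\<^sub>R x' = (t' - t) *\<^sub>R x0" using eq by (simp add: algebra_simps)
    then have "inverse (t' - t) *\<^sub>R (x + (-1) *\<^sub>R x') = x0" using \<open>t \<noteq> t'\<close> by simp
    ultimately show False using x0 by metis
  qed
  then show ?thesis using eq dominated_linear_graphD(4)[OF M] xa xa' by auto
qed

lemma dominated_linear_graph_adjoin:
  assumes hom: "\<And>c x. c \<ge> 0 \<Longrightarrow> p (c *\<^sub>R x) = c * p x"
    and M: "dominated_linear_graph p M" and x0: "\<And>a. (x0,a) \<notin> M"
    and al1: "\<And>x a. (x,a) \<in> M \<Longrightarrow> a - p (x - x0) \<le> \<alpha>"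
    and al2: "\<And>y b. (y,b) \<in> M \<Longrightarrow> \<alpha> \<le> p (y + x0) - b"
  shows "dominated_linear_graph p (graph_adjoin M x0 \<alpha>)"
  unfolding dominated_linear_graph_def
proof (intro conjI allI impI)
  obtain x a where "(x,a) \<in> M" using dominated_linear_graphD(1)[OF M] by auto
  then have "(x + 0 *\<^sub>R x0, a + 0 * \<alpha>) \<in> graph_adjoin M x0 \<alpha>" unfolding graph_adjoin_def by blast
  then show "graph_adjoin M x0 \<alpha> \<noteq> {}" by blast
next
  fix x a y b assume "(x,a) \<in> graph_adjoin M x0 \<alpha>" "(y,b) \<in> graph_adjoin M x0 \<alpha>"
  then obtain x1 a1 t1 x2 a2 t2 where "(x1,a1) \<in> M" "(x2,a2) \<in> M"
    "x = x1 + t1 *\<^sub>R x0" "a = a1 + t1 * \<alpha>" "y = x2 + t2 *\<^sub>R x0" "b = a2 + t2 * \<alpha>"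
    unfolding graph_adjoin_def by blast
  moreover have "x + y = (x1 + x2) + (t1 + t2) *\<^sub>R x0" "a + b = (a1 + a2) + (t1 + t2) * \<alpha>"
    using calculation by (simp_all add: algebra_simps)
  ultimately show "(x+y, a+b) \<in> graph_adjoin M x0 \<alpha>"
    unfolding graph_adjoin_def using dominated_linear_graphD(2)[OF M] by blast
next
  fix x a c assume "(x,a) \<in> graph_adjoin M x0 \<alpha>"
  then obtain x1 a1 t1 where "(x1,a1) \<in> M" "x = x1 + t1 *\<^sub>R x0" "a = a1 + t1 * \<alpha>"
    unfolding graph_adjoin_def by blast
  moreover have "c *\<^sub>R x = c *\<^sub>R x1 + (c * t1) *\<^sub>R x0" "c * a = c * a1 + (c * t1) * \<alpha>"
    using calculation by (simp_all add: algebra_simps)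
  ultimately show "(c *\<^sub>R x, c * a) \<in> graph_adjoin M x0 \<alpha>"
    unfolding graph_adjoin_def using dominated_linear_graphD(3)[OF M] by blast
next
  fix x a b assume "(x,a) \<in> graph_adjoin M x0 \<alpha>" "(x,b) \<in> graph_adjoin M x0 \<alpha>"
  then obtain x1 a1 t1 x2 a2 t2 where "(x1,a1) \<in> M" "(x2,a2) \<in> M"
    "x = x1 + t1 *\<^sub>R x0" "a = a1 + t1 * \<alpha>" "x = x2 + t2 *\<^sub>R x0" "b = a2 + t2 * \<alpha>"
    unfolding graph_adjoin_def by blast
  then show "a = b" using dominated_linear_graph_adjoin_unique[OF M x0, of x1 a1 x2 a2 t1 t2] by simp
next
  fix x a assume "(x,a) \<in> graph_adjoin M x0 \<alpha>"
  then show "a \<le> p x"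
    unfolding graph_adjoin_def using dominated_linear_graph_adjoin_le[OF hom M al1 al2] by blast
qed

lemma dominated_linear_graph_extend:
  assumes sub: "\<And>x y. p (x + y) \<le> p x + p y"
    and hom: "\<And>c x. c \<ge> 0 \<Longrightarrow> p (c *\<^sub>R x) = c * p x"
    and M: "dominated_linear_graph p M" and x0: "\<And>a. (x0,a) \<notin> M"
  shows "\<exists>M'. dominated_linear_graph p M' \<and> M \<subset> M'"
proof -
  obtain \<alpha> where al1: "\<And>x a. (x,a) \<in> M \<Longrightarrow> a - p (x - x0) \<le> \<alpha>"
    and al2: "\<And>y b. (y,b) \<in> M \<Longrightarrow> \<alpha> \<le> p (y + x0) - b"
    using dominated_linear_graph_extension_value[OF sub M] by blast
  have "M \<subseteq> graph_adjoin M x0 \<alpha>"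
  proof
    fix z assume "z \<in> M"
    then obtain x a where "z = (x,a)" "(x,a) \<in> M" by (cases z) auto
    then show "z \<in> graph_adjoin M x0 \<alpha>"
      unfolding graph_adjoin_def by (intro CollectI exI[of _ x] exI[of _ a] exI[of _ 0]) simp
  qed
  moreover obtain x a where "(x,a) \<in> M" using dominated_linear_graphD(1)[OF M] by auto
  then have "(0,0) \<in> M" using dominated_linear_graphD(3)[OF M, of x a 0] by simp
  then have "(x0, \<alpha>) \<in> graph_adjoin M x0 \<alpha>"
    unfolding graph_adjoin_def by (intro CollectI exI[of _ 0] exI[of _ 0] exI[of _ 1]) simp
  ultimately show ?thesis using dominated_linear_graph_adjoin[OF hom M x0 al1 al2] x0 by blast
qed

lemma dominated_linear_graph_maximal:
  assumes hom: "\<And>c x. c \<ge> 0 \<Longrightarrow> p (c *\<^sub>R x) = c * p x"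
  obtains M where "dominated_linear_graph p M"
    and "\<And>X. dominated_linear_graph p X \<Longrightarrow> M \<subseteq> X \<Longrightarrow> X = M"
proof -
  define A where "A = {G. dominated_linear_graph p G}"
  have "{(0,0)} \<in> A"
    using hom[of 0 0] by (auto simp: A_def dominated_linear_graph_def)
  then have "\<exists>M\<in>A. \<forall>X\<in>A. M \<subseteq> X \<longrightarrow> X = M"
  proof (intro Zorn_Lemma2 ballI)
    fix C assume C: "C \<in> chains A"
    show "\<exists>U\<in>A. \<forall>X\<in>C. X \<subseteq> U"
    proof (cases "C = {}")
      case True
      then show ?thesis using \<open>{(0,0)} \<in> A\<close> by blast
    next
      case False
      then have "\<Union>C \<in> A" using dominated_linear_graph_Union_chain C by (simp add: A_def)
      then show ?thesis by blast
    qed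
  qed
  then show ?thesis using that by (auto simp: A_def)
qed

theorem hahn_banach_sublinear:
  fixes p :: "'a::real_vector \<Rightarrow> real"
  assumes sub: "\<And>x y. p (x + y) \<le> p x + p y"
    and hom: "\<And>c x. c \<ge> 0 \<Longrightarrow> p (c *\<^sub>R x) = c * p x"
  shows "\<exists>u. linear u \<and> (\<forall>x. u x \<le> p x)"
proof -
  obtain M where M: "dominated_linear_graph p M"
    and max: "\<And>X. dominated_linear_graph p X \<Longrightarrow> M \<subseteq> X \<Longrightarrow> X = M"
    using dominated_linear_graph_maximal[OF hom] by blast
  have total: "\<exists>a. (x,a) \<in> M" for x
    using dominated_linear_graph_extend[OF sub hom M] max by blast
  define u where "u x = (THE a. (x,a) \<in> M)" for x
  have uM: "(x, u x) \<in> M" for x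
  proof -
    obtain a where "(x,a) \<in> M" using total by blast
    then show ?thesis
      unfolding u_def by (rule theI) (use dominated_linear_graphD(4)[OF M] \<open>(x,a) \<in> M\<close> in blast)
  qed
  have "linear u"
  proof (rule linearI)
    fix x y show "u (x + y) = u x + u y"
      using dominated_linear_graphD(4)[OF M uM dominated_linear_graphD(2)[OF M uM uM]] .
  next
    fix c x show "u (c *\<^sub>R x) = c *\<^sub>R u x"
      using dominated_linear_graphD(4)[OF M uM dominated_linear_graphD(3)[OF M uM]] by simp
  qed
  moreover have "u x \<le> p x" for x using dominated_linear_graphD(5)[OF M uM] .
  ultimately show ?thesis by blast
qed

section \<open>Closed convex sets with absorbing linear image\<close>

lemma convex_scaleR_mem:
  assumes "convex S" "0 \<in> S" "x \<in> S" "0 \<le> c" "c \<le> 1"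
  shows "c *\<^sub>R x \<in> S"
  using convexD[OF assms(1) assms(3) assms(2), of c "1 - c"] assms(4,5) by simp

lemma convex_dilate_mem:
  assumes cK: "convex K" and K0: "0 \<in> K" and t: "t > 0" "t *\<^sub>R z \<in> K"
  shows "\<exists>n. (1 / real (Suc n)) *\<^sub>R z \<in> K"
proof -
  obtain n :: nat where n: "1 / t < real n" using reals_Archimedean2 by blast
  have "1 \<le> real (Suc n) * t" using n t by (simp add: field_simps)
  then have "1 / (real (Suc n) * t) \<le> 1" by simp
  then have "(1 / (real (Suc n) * t)) *\<^sub>R (t *\<^sub>R z) \<in> K"
    using t by (intro convex_scaleR_mem[OF cK K0 t(2)]) auto
  then show ?thesis using t by auto
qed

lemma closed_absorbing_contains_relative_ball:
  fixes K :: "'z::banach set"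
  assumes Ycl: "closed Y" and Ysub: "subspace Y" and cK: "convex K" and KY: "K \<subseteq> Y"
    and Kcl: "closed K" and absorb: "\<And>z. z \<in> Y \<Longrightarrow> \<exists>t>0. t *\<^sub>R z \<in> K"
  shows "\<exists>a\<in>Y. \<exists>\<epsilon>>0. \<forall>w\<in>Y. norm (w - a) < \<epsilon> \<longrightarrow> w \<in> K"
proof -
  have K0: "0 \<in> K" using absorb[of 0] Ysub by (auto simp: subspace_0)
  \<comment> \<open>Baire: \<open>Y\<close> is the union of the closed sets \<open>Y \<inter> (n + 1) K\<close>, so one has interior\<close>
  define T where "T n = Y \<inter> ((\<lambda>z. (1 / real (Suc n)) *\<^sub>R z) -` K)" for n
  have clT: "closedin (top_of_set Y) (T n)" for n
    unfolding T_def by (intro closedin_closed_Int continuous_closed_vimage Kcl) (intro continuous_intros)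
  have UT: "\<Union>(range T) = Y"
  proof
    show "\<Union>(range T) \<subseteq> Y" by (auto simp: T_def)
    show "Y \<subseteq> \<Union>(range T)"
    proof
      fix z assume z: "z \<in> Y"
      obtain t where "t > 0" "t *\<^sub>R z \<in> K" using absorb[OF z] by blast
      then obtain n where "(1 / real (Suc n)) *\<^sub>R z \<in> K" using convex_dilate_mem[OF cK K0] by blast
      then show "z \<in> \<Union>(range T)" using z by (auto simp: T_def)
    qed
  qed
  have cms: "completely_metrizable_space (top_of_set Y)"
    by (rule completely_metrizable_space_closedin[OF completely_metrizable_space_euclidean])
       (use Ycl closed_closedin in blast)
  have "\<exists>n. top_of_set Y interior_of T n \<noteq> {}"
  proof (rule ccontr)
    assume "\<not> ?thesis"
    then have "top_of_set Y interior_of \<Union>(range T) = {}"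
      using Baire_category_alt[OF disjI1[OF cms], of "range T"] clT by auto
    then show False using UT K0 KY interior_of_topspace[of "top_of_set Y"] by auto
  qed
  then obtain n x where "x \<in> top_of_set Y interior_of T n" by blast
  then obtain U where U: "openin (top_of_set Y) U" "x \<in> U" "U \<subseteq> T n" by (auto simp: interior_of_def)
  then obtain \<epsilon> where e: "\<epsilon> > 0" "ball x \<epsilon> \<inter> Y \<subseteq> U" by (meson openin_contains_ball)
  define N where "N = real (Suc n)"
  have Npos: "N > 0" by (simp add: N_def)
  have xY: "x \<in> Y" using U by (meson openin_imp_subset subsetD)
  have "w \<in> K" if wY: "w \<in> Y" and wn: "norm (w - (1/N) *\<^sub>R x) < \<epsilon> / N" for w
  proof -
    have "x - N *\<^sub>R w = N *\<^sub>R ((1/N) *\<^sub>R x - w)" using Npos by (simp add: scaleR_diff_right)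
    then have "dist x (N *\<^sub>R w) = N * norm (w - (1/N) *\<^sub>R x)"
      using Npos by (simp add: dist_norm norm_minus_commute)
    also have "\<dots> < \<epsilon>" using wn Npos by (simp add: field_simps)
    finally have "N *\<^sub>R w \<in> T n" using e U wY Ysub by (auto simp: subspace_scale)
    then show ?thesis using Npos by (simp add: T_def N_def)
  qed
  moreover have "(1/N) *\<^sub>R x \<in> Y" using xY Ysub by (simp add: subspace_scale)
  ultimately show ?thesis using e Npos by (metis divide_pos_pos)
qed

text \<open>Convexity moves a relative ball around \<open>a\<close> to one around \<open>0\<close>, using a point on the
  ray through \<open>-a\<close>.\<close>

lemma convex_relative_ball_imp_ball_at_0:
  assumes cK: "convex K" and Ysub: "subspace Y" and aY: "a \<in> Y" and e: "\<epsilon> > 0"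
    and near: "\<And>w. w \<in> Y \<Longrightarrow> norm (w - a) < \<epsilon> \<Longrightarrow> w \<in> K"
    and t: "t > 0" "t *\<^sub>R (- a) \<in> K"
  shows "\<exists>r>0. \<forall>v\<in>Y. norm v < r \<longrightarrow> v \<in> K"
proof -
  define r where "r = \<epsilon> * t / (1 + t)"
  have "v \<in> K" if vY: "v \<in> Y" and vn: "norm v < r" for v
  proof -
    define w where "w = ((1 + t) / t) *\<^sub>R v + a"
    have "w \<in> Y" using vY aY Ysub by (simp add: w_def subspace_scale subspace_add)
    moreover have "norm (w - a) < \<epsilon>"
    proof -
      have "norm (w - a) = ((1 + t) / t) * norm v" using t by (simp add: w_def)
      also have "\<dots> < ((1 + t) / t) * r" using vn t by (intro mult_strict_left_mono) auto
      also have "\<dots> = \<epsilon>" unfolding r_def using t by (simp add: divide_simps)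
      finally show ?thesis .
    qed
    ultimately have wK: "w \<in> K" by (rule near)
    have "(t / (1 + t)) * ((1 + t) / t) = 1" using t by (simp add: divide_simps)
    then have "v = (1 / (1 + t)) *\<^sub>R (t *\<^sub>R (- a)) + (t / (1 + t)) *\<^sub>R w"
      by (simp add: w_def algebra_simps)
    also have "\<dots> \<in> K" by (rule convexD[OF cK t(2) wK]) (use t in \<open>auto simp: field_simps\<close>)
    finally show "v \<in> K" .
  qed
  moreover have "r > 0" using e t by (simp add: r_def)
  ultimately show ?thesis by blast
qed

lemma closed_convex_absorbing_contains_ball:
  fixes K :: "'z::banach set"
  assumes "closed Y" and Ysub: "subspace Y" and "convex K" and "K \<subseteq> Y"
    and "closed K" and absorb: "\<And>z. z \<in> Y \<Longrightarrow> \<exists>t>0. t *\<^sub>R z \<in> K"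
  shows "\<exists>r>0. \<forall>z\<in>Y. norm z < r \<longrightarrow> z \<in> K"
proof -
  obtain a \<epsilon> where "a \<in> Y" "\<epsilon> > 0" "\<And>w. w \<in> Y \<Longrightarrow> norm (w - a) < \<epsilon> \<Longrightarrow> w \<in> K"
    using closed_absorbing_contains_relative_ball[OF assms] by blast
  moreover obtain t where "t > 0" "t *\<^sub>R (- a) \<in> K"
    using absorb[of "-a"] \<open>a \<in> Y\<close> Ysub by (meson subspace_neg)
  ultimately show ?thesis using convex_relative_ball_imp_ball_at_0[OF \<open>convex K\<close> Ysub] by blast
qed

lemma convex_halving_sum_mem:
  assumes cD: "convex D" and D0: "0 \<in> D" and d: "\<And>k. d k \<in> D"
  shows "(\<Sum>k<n. (1/2::real)^(Suc k) *\<^sub>R d k) \<in> D"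
proof -
  have "\<exists>e\<in>D. (\<Sum>k<n. (1/2::real)^(Suc k) *\<^sub>R d k) = (1 - (1/2)^n) *\<^sub>R e"
  proof (induction n)
    case 0 then show ?case using D0 by auto
  next
    case (Suc n)
    then obtain e where e: "e \<in> D" "(\<Sum>k<n. (1/2::real)^(Suc k) *\<^sub>R d k) = (1 - (1/2)^n) *\<^sub>R e" by blast
    define c :: real where "c = 1 - (1/2)^(Suc n)"
    have hn: "(1/2::real)^n \<le> 1" by (simp add: power_le_one)
    have cpos: "c > 0" unfolding c_def using hn by simp
    have sum1: "(1 - (1/2::real)^n) / c + (1/2)^(Suc n) / c = 1"
    proof -
      have "(1 - (1/2::real)^n) + (1/2)^(Suc n) = c" unfolding c_def by simp
      then show ?thesis unfolding add_divide_distrib[symmetric] using cpos by simp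
    qed
    define e' where "e' = ((1 - (1/2)^n) / c) *\<^sub>R e + ((1/2)^(Suc n) / c) *\<^sub>R d n"
    have "e' \<in> D" unfolding e'_def
      by (rule convexD[OF cD e(1) d _ _ sum1]) (use cpos hn in auto)
    moreover have "(\<Sum>k<Suc n. (1/2::real)^(Suc k) *\<^sub>R d k) = c *\<^sub>R e'"
      using cpos e(2) by (simp add: e'_def scaleR_add_right)
    ultimately show ?case unfolding c_def by blast
  qed
  then obtain e where "e \<in> D" "(\<Sum>k<n. (1/2::real)^(Suc k) *\<^sub>R d k) = (1 - (1/2)^n) *\<^sub>R e" by blast
  moreover have "(1/2::real)^n \<le> 1" by (simp add: power_le_one)
  ultimately show ?thesis using convex_scaleR_mem[OF cD D0] by simp
qed

lemma closure_linear_image_approx: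
  assumes lin: "linear L" and Y: "subspace Y" and r: "r > 0"
    and cl: "\<And>z. z \<in> Y \<Longrightarrow> norm z < r \<Longrightarrow> z \<in> closure (L ` D)"
    and z: "z \<in> Y" "norm z < r * (1/2)^k"
  shows "\<exists>d\<in>D. norm (z - L ((1/2)^k *\<^sub>R d)) < r * (1/2)^(Suc k)"
proof -
  define w where "w = ((2::real)^k) *\<^sub>R z"
  have "norm w = 2^k * norm z" by (simp add: w_def)
  also have "\<dots> < 2^k * (r * (1/2)^k)" using z by simp
  also have "\<dots> = r" by (simp add: power_one_over)
  finally have "w \<in> closure (L ` D)" using cl z Y unfolding w_def by (simp add: subspace_scale)
  then have "\<forall>e>0. \<exists>y\<in>L ` D. dist y w < e" by (simp only: closure_approachable)
  from this[rule_format, OF half_gt_zero[OF r]] obtain e where "e \<in> L ` D" "dist e w < r/2" by blast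
  then obtain d where d: "d \<in> D" "dist (L d) w < r/2" by blast
  have "z - L ((1/2)^k *\<^sub>R d) = (1/2)^k *\<^sub>R (w - L d)"
    by (simp add: w_def linear_scale[OF lin] scaleR_diff_right power_one_over)
  then have "norm (z - L ((1/2)^k *\<^sub>R d)) = (1/2)^k * norm (w - L d)" by simp
  also have "\<dots> < (1/2)^k * (r/2)" using d by (simp add: dist_norm norm_minus_commute)
  also have "\<dots> = r * (1/2)^(Suc k)" by simp
  finally show ?thesis using d(1) by blast
qed

text \<open>The classical open-mapping iteration: approximate \<open>z\<close> successively at scales
  \<open>2\<^sup>-\<^sup>k\<close>; the series of the chosen points converges in the closed convex set \<open>D\<close>.\<close>

lemma closure_linear_image_halving_sequence:
  assumes lin: "linear L" and Y: "subspace Y" and LDY: "L ` D \<subseteq> Y" and r: "r > 0"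
    and cl: "\<And>z. z \<in> Y \<Longrightarrow> norm z < r \<Longrightarrow> z \<in> closure (L ` D)"
    and z: "z \<in> Y" "norm z < r/2"
  obtains ds where "\<And>n. ds n \<in> D"
    and "\<And>n. norm (z - L (\<Sum>k<n. (1/2)^(Suc k) *\<^sub>R ds k)) < r * (1/2)^(Suc n)"
proof -
  define ch where "ch k z = (SOME d. d \<in> D \<and> norm (z - L ((1/2)^k *\<^sub>R d)) < r * (1/2)^(Suc k))" for k z
  have ch: "ch k z \<in> D \<and> norm (z - L ((1/2)^k *\<^sub>R ch k z)) < r * (1/2)^(Suc k)"
    if "z \<in> Y" "norm z < r * (1/2)^k" for k z
  proof -
    have "\<exists>d. d \<in> D \<and> norm (z - L ((1/2)^k *\<^sub>R d)) < r * (1/2)^(Suc k)"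
      using closure_linear_image_approx[OF lin Y r cl that] by blast
    from someI_ex[OF this] show ?thesis unfolding ch_def .
  qed
  define zs where "zs = rec_nat z (\<lambda>n w. w - L ((1/2)^(Suc n) *\<^sub>R ch (Suc n) w))"
  have zs0: "zs 0 = z" and zsS: "zs (Suc n) = zs n - L ((1/2)^(Suc n) *\<^sub>R ch (Suc n) (zs n))" for n
    by (simp_all add: zs_def)
  define ds where "ds n = ch (Suc n) (zs n)" for n
  have inv: "zs n \<in> Y \<and> norm (zs n) < r * (1/2)^(Suc n)" for n
  proof (induction n)
    case 0 then show ?case using z zs0 by simp
  next
    case (Suc n)
    have c: "ch (Suc n) (zs n) \<in> D \<and> norm (zs n - L ((1/2)^(Suc n) *\<^sub>R ch (Suc n) (zs n))) < r * (1/2)^(Suc (Suc n))"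
      using ch Suc by blast
    have "L ((1/2)^(Suc n) *\<^sub>R ch (Suc n) (zs n)) \<in> Y"
      using c LDY Y by (simp add: linear_scale[OF lin] subspace_scale image_subset_iff)
    then have "zs (Suc n) \<in> Y" using Suc Y by (simp add: zsS subspace_diff)
    then show ?case using c zsS by simp
  qed
  have Lsum: "L (\<Sum>k<n. (1/2)^(Suc k) *\<^sub>R ds k) = z - zs n" for n
  proof (induction n)
    case 0 then show ?case by (simp add: zs0 linear_0[OF lin])
  next
    case (Suc n) then show ?case by (simp add: zsS ds_def linear_add[OF lin])
  qed
  show ?thesis
  proof (rule that)
    show "ds n \<in> D" for n using ch inv unfolding ds_def by blast
    show "norm (z - L (\<Sum>k<n. (1/2)^(Suc k) *\<^sub>R ds k)) < r * (1/2)^(Suc n)" for n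
      unfolding Lsum using inv[of n] by simp
  qed
qed

lemma closure_linear_image_ball_imp_ball:
  fixes L :: "'x::banach \<Rightarrow> 'z::real_normed_vector"
  assumes L: "bounded_linear L" and cD: "convex D" and clD: "closed D" and D0: "0 \<in> D"
    and Dn: "\<And>d. d \<in> D \<Longrightarrow> norm d \<le> 1"
    and Y: "subspace Y" and LDY: "L ` D \<subseteq> Y" and r: "r > 0"
    and cl: "\<And>z. z \<in> Y \<Longrightarrow> norm z < r \<Longrightarrow> z \<in> closure (L ` D)"
    and z: "z \<in> Y" "norm z < r/2"
  shows "z \<in> L ` D"
proof -
  obtain ds where dsD: "\<And>n. ds n \<in> D"
    and close: "\<And>n. norm (z - L (\<Sum>k<n. (1/2)^(Suc k) *\<^sub>R ds k)) < r * (1/2)^(Suc n)"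
    using closure_linear_image_halving_sequence[OF bounded_linear.linear[OF L] Y LDY r cl z] by blast
  define f where "f k = (1/2::real)^(Suc k) *\<^sub>R ds k" for k
  have "summable f"
  proof (rule summable_comparison_test'[where N=0])
    show "summable (\<lambda>k. (1/2::real) * (1/2)^k)" by (intro summable_mult summable_geometric) simp
    fix k show "norm (f k) \<le> (1/2) * (1/2)^k"
      using Dn[OF dsD[of k]] by (simp add: f_def mult_left_le)
  qed
  then have lim: "(\<lambda>n. \<Sum>k<n. f k) \<longlonglongrightarrow> suminf f" by (rule summable_LIMSEQ)
  have "(\<Sum>k<n. f k) \<in> D" for n
    unfolding f_def by (rule convex_halving_sum_mem[OF cD D0 dsD])
  then have "suminf f \<in> D" by (rule closed_sequentially[OF clD _ lim])
  have "(\<lambda>n. z - L (\<Sum>k<n. f k)) \<longlonglongrightarrow> 0"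
  proof (rule Lim_null_comparison)
    show "\<forall>\<^sub>F n in sequentially. norm (z - L (\<Sum>k<n. f k)) \<le> r * (1/2)^(Suc n)"
      by (rule always_eventually) (use close less_imp_le in \<open>auto simp: f_def\<close>)
    show "(\<lambda>n. r * (1/2::real)^(Suc n)) \<longlonglongrightarrow> 0"
      by (intro tendsto_mult_right_zero LIMSEQ_Suc LIMSEQ_power_zero) simp
  qed
  then have "(\<lambda>n. L (\<Sum>k<n. f k)) \<longlonglongrightarrow> z"
    using tendsto_diff[OF tendsto_const[of z]] by fastforce
  then have "L (suminf f) = z"
    using LIMSEQ_unique[OF bounded_linear.tendsto[OF L lim]] by blast
  then show "z \<in> L ` D" using \<open>suminf f \<in> D\<close> by blast
qed

lemma convex_linear_image_absorbing_contains_ball: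
  fixes L :: "'x::banach \<Rightarrow> 'z::banach"
  assumes L: "bounded_linear L" and cD: "convex D" and clD: "closed D" and D0: "0 \<in> D"
    and Dn: "\<And>d. d \<in> D \<Longrightarrow> norm d \<le> 1"
    and Ycl: "closed Y" and Y: "subspace Y" and LDY: "L ` D \<subseteq> Y"
    and absorb: "\<And>z. z \<in> Y \<Longrightarrow> \<exists>t>0. t *\<^sub>R z \<in> L ` D"
  shows "\<exists>r>0. \<forall>z\<in>Y. norm z < r \<longrightarrow> z \<in> L ` D"
proof -
  have lin: "linear L" using L bounded_linear.linear by blast
  have "convex (closure (L ` D))" using convex_linear_image[OF lin cD] by (rule convex_closure)
  moreover have "closure (L ` D) \<subseteq> Y" using LDY Ycl by (rule closure_minimal)
  moreover have "\<exists>t>0. t *\<^sub>R z \<in> closure (L ` D)" if zY: "z \<in> Y" for z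
  proof -
    obtain t where "t > 0" "t *\<^sub>R z \<in> L ` D" using absorb[OF zY] by blast
    then show ?thesis using closure_subset[of "L ` D"] by blast
  qed
  ultimately have "\<exists>r>0. \<forall>z\<in>Y. norm z < r \<longrightarrow> z \<in> closure (L ` D)"
    by (intro closed_convex_absorbing_contains_ball[OF Ycl Y _ _ closed_closure])
  then obtain r where r: "r > 0" "\<forall>z\<in>Y. norm z < r \<longrightarrow> z \<in> closure (L ` D)" by blast
  have "z \<in> L ` D" if "z \<in> Y" "norm z < r/2" for z
    using r(2) by (intro closure_linear_image_ball_imp_ball[OF L cD clD D0 Dn Y LDY r(1) _ that]) auto
  then show ?thesis using r(1) by (intro exI[of _ "r/2"]) auto
qed

definition local_sublevel :: "'v::real_normed_vector set \<Rightarrow> ('v \<Rightarrow> real) \<Rightarrow> 'v \<Rightarrow> 'v set" where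
  "local_sublevel W \<phi> w0 = {d. norm d \<le> 1 \<and> w0 + d \<in> W \<and> \<phi> (w0 + d) \<le> \<phi> w0 + 1}"

lemma closed_local_sublevel:
  assumes "\<And>c. closed {w \<in> W. \<phi> w \<le> c}"
  shows "closed (local_sublevel W \<phi> w0)"
proof -
  have "local_sublevel W \<phi> w0 = cball 0 1 \<inter> (\<lambda>d. w0 + d) -` {w \<in> W. \<phi> w \<le> \<phi> w0 + 1}"
    by (auto simp: local_sublevel_def)
  then show ?thesis
    by (simp only:) (intro closed_Int closed_cball continuous_closed_vimage assms continuous_intros)
qed

lemma convex_local_sublevel:
  assumes phi: "convex_on W \<phi>"
  shows "convex (local_sublevel W \<phi> w0)"
  unfolding convex_alt
proof (intro ballI allI impI)
  fix d1 d2 and l :: real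
  assume d: "d1 \<in> local_sublevel W \<phi> w0" "d2 \<in> local_sublevel W \<phi> w0" and l: "0 \<le> l \<and> l \<le> 1"
  have eq: "w0 + ((1-l) *\<^sub>R d1 + l *\<^sub>R d2) = (1-l) *\<^sub>R (w0 + d1) + l *\<^sub>R (w0 + d2)"
    by (simp add: algebra_simps)
  have "\<phi> ((1-l) *\<^sub>R (w0 + d1) + l *\<^sub>R (w0 + d2)) \<le> (1-l) * \<phi> (w0 + d1) + l * \<phi> (w0 + d2)"
    using convex_onD[OF phi] d l by (simp add: local_sublevel_def)
  also have "\<dots> \<le> (1-l) * (\<phi> w0 + 1) + l * (\<phi> w0 + 1)"
    using d l by (intro add_mono mult_left_mono) (auto simp: local_sublevel_def)
  finally have "\<phi> (w0 + ((1-l) *\<^sub>R d1 + l *\<^sub>R d2)) \<le> \<phi> w0 + 1" unfolding eq by (simp add: algebra_simps)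
  moreover have "norm ((1-l) *\<^sub>R d1 + l *\<^sub>R d2) \<le> (1-l) * norm d1 + l * norm d2"
    using l by (metis abs_of_nonneg diff_ge_0_iff_ge norm_scaleR norm_triangle_ineq)
  moreover have "(1-l) * norm d1 + l * norm d2 \<le> (1-l) * 1 + l * 1"
    using d l by (intro add_mono mult_left_mono) (auto simp: local_sublevel_def)
  moreover have "w0 + ((1-l) *\<^sub>R d1 + l *\<^sub>R d2) \<in> W"
    unfolding eq using convexD_alt[OF convex_on_imp_convex[OF phi]] d l by (simp add: local_sublevel_def)
  ultimately show "(1-l) *\<^sub>R d1 + l *\<^sub>R d2 \<in> local_sublevel W \<phi> w0" by (simp add: local_sublevel_def)
qed

lemma local_sublevel_absorbing:
  assumes phi: "convex_on W \<phi>" and w0: "w0 \<in> W" and w: "w \<in> W"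
  shows "\<exists>\<tau>>0. \<tau> *\<^sub>R (w - w0) \<in> local_sublevel W \<phi> w0"
proof -
  define N where "N = norm (w - w0) + \<bar>\<phi> w - \<phi> w0\<bar> + 1"
  have N1: "N \<ge> 1" unfolding N_def using norm_ge_zero[of "w - w0"] by linarith
  define \<tau> where "\<tau> = 1 / N"
  have tpos: "\<tau> > 0" and t1: "\<tau> \<le> 1" using N1 by (auto simp: \<tau>_def)
  have tle: "\<tau> * a \<le> 1" if "a \<le> N" for a
    using that N1 by (simp add: \<tau>_def divide_simps)
  have eq: "w0 + \<tau> *\<^sub>R (w - w0) = (1-\<tau>) *\<^sub>R w0 + \<tau> *\<^sub>R w" by (simp add: algebra_simps)
  have "\<phi> (w0 + \<tau> *\<^sub>R (w - w0)) \<le> (1-\<tau>) * \<phi> w0 + \<tau> * \<phi> w"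
    unfolding eq using convex_onD[OF phi] w0 w tpos t1 by simp
  also have "\<dots> \<le> \<phi> w0 + 1"
  proof -
    have "\<phi> w - \<phi> w0 \<le> N" unfolding N_def using norm_ge_zero[of "w - w0"] by linarith
    from tle[OF this] show ?thesis by (simp add: algebra_simps)
  qed
  moreover have "norm (\<tau> *\<^sub>R (w - w0)) \<le> 1"
    using tle[of "norm (w - w0)"] tpos by (simp add: N_def)
  moreover have "w0 + \<tau> *\<^sub>R (w - w0) \<in> W"
    unfolding eq using convexD_alt[OF convex_on_imp_convex[OF phi] w0 w] tpos t1 by simp
  ultimately show ?thesis using tpos by (auto simp: local_sublevel_def)
qed

lemma convex_sublevel_linear_image_contains_ball:
  fixes L :: "'v::banach \<Rightarrow> 'z::banach"
  assumes L: "bounded_linear L" and phi: "convex_on W \<phi>"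
    and sublevel: "\<And>c. closed {w \<in> W. \<phi> w \<le> c}"
    and w0: "w0 \<in> W" "L w0 = 0"
    and Ycl: "closed Y" and Y: "subspace Y" and LWY: "L ` W \<subseteq> Y"
    and cone: "\<And>z. z \<in> Y \<Longrightarrow> \<exists>c>0. \<exists>w\<in>W. z = c *\<^sub>R L w"
  shows "\<exists>r>0. \<forall>z\<in>Y. norm z < r \<longrightarrow> (\<exists>w\<in>W. L w = z \<and> norm (w - w0) \<le> 1 \<and> \<phi> w \<le> \<phi> w0 + 1)"
proof -
  have lin: "linear L" using L bounded_linear.linear by blast
  let ?D = "local_sublevel W \<phi> w0"
  have LD: "L d = L (w0 + d)" for d using w0(2) linear_add[OF lin] by simp
  have LDY: "L ` ?D \<subseteq> Y" using LWY LD by (auto simp: local_sublevel_def)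
  have absorb: "\<exists>t>0. t *\<^sub>R z \<in> L ` ?D" if "z \<in> Y" for z
  proof -
    obtain c w where c: "c > 0" "w \<in> W" "z = c *\<^sub>R L w" using cone[OF \<open>z \<in> Y\<close>] by blast
    obtain \<tau> where "\<tau> > 0" "\<tau> *\<^sub>R (w - w0) \<in> ?D" using local_sublevel_absorbing[OF phi w0(1) c(2)] by blast
    moreover have "(\<tau> / c) *\<^sub>R z = L (\<tau> *\<^sub>R (w - w0))"
      using c by (simp add: linear_scale[OF lin] linear_diff[OF lin] w0(2))
    ultimately show ?thesis using c by (intro exI[of _ "\<tau> / c"]) auto
  qed
  have D0: "0 \<in> ?D" and Dn: "\<And>d. d \<in> ?D \<Longrightarrow> norm d \<le> 1"
    using w0 by (auto simp: local_sublevel_def)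
  obtain r where r: "r > 0" "\<forall>z\<in>Y. norm z < r \<longrightarrow> z \<in> L ` ?D"
    using convex_linear_image_absorbing_contains_ball[OF L convex_local_sublevel[OF phi]
        closed_local_sublevel[OF sublevel] D0 Dn Ycl Y LDY absorb] by blast
  have "\<exists>w\<in>W. L w = z \<and> norm (w - w0) \<le> 1 \<and> \<phi> w \<le> \<phi> w0 + 1" if zr: "z \<in> Y" "norm z < r" for z
  proof -
    have "z \<in> L ` ?D" using r(2) zr by blast
    then obtain d where "d \<in> ?D" "z = L d" by blast
    then show ?thesis using LD[of d] by (intro bexI[of _ "w0 + d"]) (auto simp: local_sublevel_def)
  qed
  then show ?thesis using r(1) by blast
qed

section \<open>Linear minorants of convex functions\<close>

lemma convex_on_nonneg_on_kernel_imp_norm_bound: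
  fixes L :: "'v::real_vector \<Rightarrow> 'z::real_normed_vector"
  assumes psi: "convex_on W psi" and lin: "linear L" and Y: "subspace Y" and LWY: "L ` W \<subseteq> Y"
    and r: "r > 0" and ball: "\<And>z. z \<in> Y \<Longrightarrow> norm z < r \<Longrightarrow> \<exists>w\<in>W. L w = z \<and> psi w \<le> C"
    and ker: "\<And>w. w \<in> W \<Longrightarrow> L w = 0 \<Longrightarrow> 0 \<le> psi w"
  shows "\<exists>K\<ge>0. \<forall>w\<in>W. - K * norm (L w) \<le> psi w"
proof -
  define \<rho> where "\<rho> = r / 2"
  have rho: "\<rho> > 0" "\<rho> < r" using r by (auto simp: \<rho>_def)
  define C' where "C' = max C 0"
  have "- (C' / \<rho>) * norm (L w) \<le> psi w" if wW: "w \<in> W" for w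
  proof (cases "L w = 0")
    case True then show ?thesis using ker[OF wW] by simp
  next
    case False
    define a where "a = norm (L w)"
    have apos: "a > 0" using False by (simp add: a_def)
    define v where "v = (- (\<rho> / a)) *\<^sub>R L w"
    have "v \<in> Y" unfolding v_def by (rule subspace_scale[OF Y]) (use LWY wW in blast)
    moreover have "norm v < r" using apos rho by (simp add: v_def a_def)
    ultimately obtain w1 where w1: "w1 \<in> W" "L w1 = v" "psi w1 \<le> C'"
      using ball unfolding C'_def by force
    \<comment> \<open>the segment from \<open>w1\<close> to \<open>w\<close> meets the kernel of \<open>L\<close> at parameter \<open>l\<close>\<close>
    define l where "l = \<rho> / (a + \<rho>)"
    have l01: "0 \<le> l" "l \<le> 1" using apos rho by (auto simp: l_def)
    have e1: "(a + \<rho>) * (1 - l) = a" and e2: "(a + \<rho>) * l = \<rho>"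
      using apos rho by (simp_all add: l_def field_simps)
    have "L ((1-l) *\<^sub>R w1 + l *\<^sub>R w) = (1-l) *\<^sub>R v + l *\<^sub>R L w"
      by (simp add: linear_add[OF lin] linear_scale[OF lin] w1(2))
    also have "\<dots> = 0" using apos rho by (simp add: v_def l_def field_simps)
    finally have "0 \<le> psi ((1-l) *\<^sub>R w1 + l *\<^sub>R w)"
      using ker convexD_alt[OF convex_on_imp_convex[OF psi] w1(1) wW l01] by blast
    also have "\<dots> \<le> (1-l) * psi w1 + l * psi w"
      using convex_onD[OF psi l01 w1(1) wW] .
    also have "\<dots> \<le> (1-l) * C' + l * psi w" using w1(3) l01 by (simp add: mult_left_mono)
    finally have "0 \<le> (a + \<rho>) * ((1-l) * C' + l * psi w)" using apos rho by simp
    also have "\<dots> = ((a + \<rho>) * (1 - l)) * C' + ((a + \<rho>) * l) * psi w" by (simp add: algebra_simps)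
    also have "\<dots> = a * C' + \<rho> * psi w" unfolding e1 e2 ..
    finally show ?thesis using rho by (simp add: a_def field_simps)
  qed
  moreover have "C' / \<rho> \<ge> 0" using rho by (simp add: C'_def)
  ultimately show ?thesis by blast
qed

text \<open>The positively homogeneous hull of \<open>psi\<close> transported along \<open>L\<close>, regularised by \<open>K \<parallel>\<cdot>\<parallel>\<close>:
  a sublinear function to which Hahn--Banach applies.\<close>

definition sublinear_envelope ::
    "real \<Rightarrow> ('v \<Rightarrow> 'z::real_normed_vector) \<Rightarrow> ('v \<Rightarrow> real) \<Rightarrow> 'v set \<Rightarrow> 'z \<Rightarrow> real" where
  "sublinear_envelope K L psi W z = Inf {l * psi w + K * norm (z - l *\<^sub>R L w) | l w. l \<ge> 0 \<and> w \<in> W}"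

context
  fixes W :: "'v::real_vector set" and psi :: "'v \<Rightarrow> real"
    and L :: "'v \<Rightarrow> 'z::real_normed_vector" and K :: real
  assumes psi: "convex_on W psi" and lin: "linear L" and K0: "K \<ge> 0" and W: "W \<noteq> {}"
    and psi_bound: "\<And>w. w \<in> W \<Longrightarrow> - K * norm (L w) \<le> psi w"
begin

lemma sublinear_envelope_term_lower:
  assumes "l \<ge> 0" "w \<in> W"
  shows "- K * norm z \<le> l * psi w + K * norm (z - l *\<^sub>R L w)"
proof -
  have "l * (- K * norm (L w)) \<le> l * psi w" by (rule mult_left_mono[OF psi_bound[OF assms(2)] assms(1)])
  moreover have "l * norm (L w) - norm z \<le> norm (z - l *\<^sub>R L w)"
    using norm_triangle_sub[of "l *\<^sub>R L w" z] assms(1) by (simp add: norm_minus_commute)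
  then have "K * (l * norm (L w) - norm z) \<le> K * norm (z - l *\<^sub>R L w)" by (rule mult_left_mono[OF _ K0])
  ultimately show ?thesis by (simp add: algebra_simps)
qed

lemma sublinear_envelope_le:
  assumes "l \<ge> 0" "w \<in> W"
  shows "sublinear_envelope K L psi W z \<le> l * psi w + K * norm (z - l *\<^sub>R L w)"
  unfolding sublinear_envelope_def
  by (rule cInf_lower) (use assms sublinear_envelope_term_lower in \<open>auto intro!: bdd_belowI\<close>)

lemma sublinear_envelope_greatest:
  assumes "\<And>l w. l \<ge> 0 \<Longrightarrow> w \<in> W \<Longrightarrow> c \<le> l * psi w + K * norm (z - l *\<^sub>R L w)"
  shows "c \<le> sublinear_envelope K L psi W z"
  unfolding sublinear_envelope_def
proof (rule cInf_greatest)
  obtain w where "w \<in> W" using W by blast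
  then have "0 * psi w + K * norm (z - 0 *\<^sub>R L w) \<in> {l * psi w + K * norm (z - l *\<^sub>R L w) | l w. l \<ge> 0 \<and> w \<in> W}"
    by blast
  then show "{l * psi w + K * norm (z - l *\<^sub>R L w) | l w. l \<ge> 0 \<and> w \<in> W} \<noteq> {}" by blast
qed (use assms in blast)

lemma sublinear_envelope_norm_bound: "\<bar>sublinear_envelope K L psi W z\<bar> \<le> K * norm z"
proof -
  obtain w where "w \<in> W" using W by blast
  from sublinear_envelope_le[OF order_refl this, of z]
  have "sublinear_envelope K L psi W z \<le> K * norm z" by simp
  moreover have "- K * norm z \<le> sublinear_envelope K L psi W z"
    by (rule sublinear_envelope_greatest) (rule sublinear_envelope_term_lower)
  ultimately show ?thesis by simp
qed

text \<open>Two terms of the infimum combine into one by convexity of \<open>psi\<close>.\<close>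

lemma sublinear_envelope_le_add_terms:
  assumes 1: "l1 \<ge> 0" "w1 \<in> W" and 2: "l2 \<ge> 0" "w2 \<in> W"
  shows "sublinear_envelope K L psi W (z1 + z2)
    \<le> (l1 * psi w1 + K * norm (z1 - l1 *\<^sub>R L w1)) + (l2 * psi w2 + K * norm (z2 - l2 *\<^sub>R L w2))"
proof (cases "l1 + l2 = 0")
  case True
  then have "l1 = 0" "l2 = 0" using 1 2 by auto
  moreover have "K * norm (z1 + z2) \<le> K * norm z1 + K * norm z2"
    using K0 norm_triangle_ineq[of z1 z2] by (simp add: mult_left_mono distrib_left[symmetric])
  ultimately show ?thesis using sublinear_envelope_norm_bound[of "z1 + z2"] by simp
next
  case False
  define l where "l = l1 + l2"
  have lpos: "l > 0" using False 1 2 by (simp add: l_def)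
  define t where "t = l2 / l"
  have t01: "0 \<le> t" "t \<le> 1" using lpos 1 2 by (auto simp: t_def l_def)
  have lt: "l * (1 - t) = l1" "l * t = l2" using lpos by (simp_all add: t_def l_def field_simps)
  define w where "w = (1-t) *\<^sub>R w1 + t *\<^sub>R w2"
  have wW: "w \<in> W" unfolding w_def by (rule convexD_alt[OF convex_on_imp_convex[OF psi] 1(2) 2(2) t01])
  have "l * psi w \<le> l * ((1-t) * psi w1 + t * psi w2)"
    using convex_onD[OF psi t01 1(2) 2(2)] lpos by (simp add: w_def mult_left_mono)
  also have "\<dots> = (l * (1-t)) * psi w1 + (l * t) * psi w2" by (simp add: algebra_simps)
  finally have A: "l * psi w \<le> l1 * psi w1 + l2 * psi w2" unfolding lt .
  have "l *\<^sub>R L w = (l * (1-t)) *\<^sub>R L w1 + (l * t) *\<^sub>R L w2"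
    by (simp add: w_def linear_add[OF lin] linear_scale[OF lin] scaleR_add_right)
  then have "z1 + z2 - l *\<^sub>R L w = (z1 - l1 *\<^sub>R L w1) + (z2 - l2 *\<^sub>R L w2)"
    unfolding lt by (simp add: algebra_simps)
  then have "K * norm (z1 + z2 - l *\<^sub>R L w) \<le> K * norm (z1 - l1 *\<^sub>R L w1) + K * norm (z2 - l2 *\<^sub>R L w2)"
    using K0 norm_triangle_ineq by (metis distrib_left mult_left_mono)
  then show ?thesis using sublinear_envelope_le[of l w "z1 + z2"] lpos wW A by linarith
qed

lemma sublinear_envelope_add:
  "sublinear_envelope K L psi W (z1 + z2) \<le> sublinear_envelope K L psi W z1 + sublinear_envelope K L psi W z2"
proof -
  let ?p = "sublinear_envelope K L psi W"
  have "?p (z1 + z2) - ?p z2 \<le> ?p z1"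
  proof (rule sublinear_envelope_greatest)
    fix l1 :: real and w1 assume 1: "l1 \<ge> 0" "w1 \<in> W"
    have "?p (z1 + z2) - (l1 * psi w1 + K * norm (z1 - l1 *\<^sub>R L w1)) \<le> ?p z2"
    proof (rule sublinear_envelope_greatest)
      fix l2 :: real and w2 assume "l2 \<ge> 0" "w2 \<in> W"
      from sublinear_envelope_le_add_terms[OF 1 this, of z1 z2]
      show "?p (z1 + z2) - (l1 * psi w1 + K * norm (z1 - l1 *\<^sub>R L w1)) \<le> l2 * psi w2 + K * norm (z2 - l2 *\<^sub>R L w2)"
        by linarith
    qed
    then show "?p (z1 + z2) - ?p z2 \<le> l1 * psi w1 + K * norm (z1 - l1 *\<^sub>R L w1)" by linarith
  qed
  then show ?thesis by linarith
qed

lemma sublinear_envelope_scale_le: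
  assumes c: "c > 0"
  shows "sublinear_envelope K L psi W (c *\<^sub>R z) \<le> c * sublinear_envelope K L psi W z"
proof -
  have "sublinear_envelope K L psi W (c *\<^sub>R z) / c \<le> sublinear_envelope K L psi W z"
  proof (rule sublinear_envelope_greatest)
    fix l :: real and w assume lw: "l \<ge> 0" "w \<in> W"
    have "sublinear_envelope K L psi W (c *\<^sub>R z) \<le> (c * l) * psi w + K * norm (c *\<^sub>R z - (c * l) *\<^sub>R L w)"
      using c lw by (intro sublinear_envelope_le) auto
    also have "c *\<^sub>R z - (c * l) *\<^sub>R L w = c *\<^sub>R (z - l *\<^sub>R L w)" by (simp add: algebra_simps)
    also have "(c * l) * psi w + K * norm \<dots> = c * (l * psi w + K * norm (z - l *\<^sub>R L w))"
      using c by (simp add: ring_distribs mult.left_commute)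
    finally show "sublinear_envelope K L psi W (c *\<^sub>R z) / c \<le> l * psi w + K * norm (z - l *\<^sub>R L w)"
      using c by (simp add: field_simps)
  qed
  then show ?thesis using c by (simp add: field_simps)
qed

lemma sublinear_envelope_scale:
  assumes "c \<ge> 0"
  shows "sublinear_envelope K L psi W (c *\<^sub>R z) = c * sublinear_envelope K L psi W z"
proof (cases "c = 0")
  case True
  then show ?thesis using sublinear_envelope_norm_bound[of 0] by simp
next
  case False
  then have c: "c > 0" using assms by simp
  have "sublinear_envelope K L psi W z = sublinear_envelope K L psi W ((1/c) *\<^sub>R (c *\<^sub>R z))" using c by simp
  also have "\<dots> \<le> (1/c) * sublinear_envelope K L psi W (c *\<^sub>R z)" using c by (intro sublinear_envelope_scale_le) simp
  finally show ?thesis using sublinear_envelope_scale_le[OF c, of z] c by (simp add: field_simps)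
qed

lemma convex_on_linear_minorant:
  "\<exists>u. bounded_linear u \<and> (\<forall>w\<in>W. u (L w) \<le> psi w)"
proof -
  let ?p = "sublinear_envelope K L psi W"
  obtain u where ulin: "linear u" and up: "\<And>z. u z \<le> ?p z"
    using hahn_banach_sublinear[of ?p] sublinear_envelope_add sublinear_envelope_scale by blast
  have "norm (u z) \<le> norm z * K" for z
    using up[of z] up[of "-z"] sublinear_envelope_norm_bound[of z] sublinear_envelope_norm_bound[of "-z"]
      linear_neg[OF ulin, of z] by (simp add: abs_le_iff mult.commute)
  then have "bounded_linear u"
    using ulin by (intro bounded_linear_intro[where K=K]) (simp_all add: linear_add linear_scale)
  moreover have "u (L w) \<le> psi w" if "w \<in> W" for w
    using up[of "L w"] sublinear_envelope_le[OF zero_le_one that, of "L w"] by simp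
  ultimately show ?thesis by blast
qed

end

lemma ereal_le_ereal_iff_real:
  assumes "x \<noteq> -\<infinity>"
  shows "x \<le> ereal c \<longleftrightarrow> x \<noteq> \<infinity> \<and> real_of_ereal x \<le> c"
  using assms by (cases x) auto

lemma convex_on_fdom:
  assumes cv: "convex_fun k" and nm: "\<And>z. k z \<noteq> -\<infinity>"
  shows "convex_on (fdom k) (\<lambda>z. real_of_ereal (k z))"
proof -
  have *: "k ((1-t) *\<^sub>R z + t *\<^sub>R w) \<noteq> \<infinity> \<and>
      real_of_ereal (k ((1-t) *\<^sub>R z + t *\<^sub>R w)) \<le> (1-t) * real_of_ereal (k z) + t * real_of_ereal (k w)"
    if z: "z \<in> fdom k" and w: "w \<in> fdom k" and t: "0 < t" "t < 1" for z w t
  proof -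
    obtain a b where a: "k z = ereal a" and b: "k w = ereal b"
      using z w by (auto simp: fdom_def) (metis real_of_ereal.elims)
    have "k ((1-t) *\<^sub>R z + t *\<^sub>R w) \<le> ereal (1-t) * k z + ereal t * k w"
      using cv t unfolding convex_fun_def by blast
    also have "\<dots> = ereal ((1-t)*a + t*b)" using a b by simp
    finally show ?thesis using a b ereal_le_ereal_iff_real[OF nm] by simp
  qed
  have "convex (fdom k)"
    unfolding convex_alt
  proof (intro ballI allI impI)
    fix z w and t :: real assume "z \<in> fdom k" "w \<in> fdom k" "0 \<le> t \<and> t \<le> 1"
    then show "(1 - t) *\<^sub>R z + t *\<^sub>R w \<in> fdom k"
      using *[of z w t] nm by (cases "t = 0 \<or> t = 1") (auto simp: fdom_def)
  qed
  with * show ?thesis by (intro convex_onI) auto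
qed

lemma convex_on_max:
  assumes "convex_on S f" "convex_on S g"
  shows "convex_on S (\<lambda>x. max (f x) (g x))"
proof (rule convex_onI)
  fix t :: real and x y assume t: "0 < t" "t < 1" and xy: "x \<in> S" "y \<in> S"
  have "f ((1 - t) *\<^sub>R x + t *\<^sub>R y) \<le> (1 - t) * max (f x) (g x) + t * max (f y) (g y)"
    using convex_onD[OF assms(1), of t x y] t xy
    by (smt (verit) max.cobounded1 mult_left_mono)
  moreover have "g ((1 - t) *\<^sub>R x + t *\<^sub>R y) \<le> (1 - t) * max (f x) (g x) + t * max (f y) (g y)"
    using convex_onD[OF assms(2), of t x y] t xy
    by (smt (verit) max.cobounded2 mult_left_mono)
  ultimately show "max (f ((1 - t) *\<^sub>R x + t *\<^sub>R y)) (g ((1 - t) *\<^sub>R x + t *\<^sub>R y))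
      \<le> (1 - t) * max (f x) (g x) + t * max (f y) (g y)" by simp
qed (use assms convex_on_imp_convex in blast)

lemma convex_on_Times_fst:
  assumes "convex_on A f" "convex B"
  shows "convex_on (A \<times> B) (\<lambda>w. f (fst w))"
  using assms convex_onD[OF assms(1)]
  by (intro convex_onI convex_Times) (auto simp: convex_on_imp_convex)

lemma convex_on_Times_snd:
  assumes "convex A" "convex_on B f"
  shows "convex_on (A \<times> B) (\<lambda>w. f (snd w))"
  using assms convex_onD[OF assms(2)]
  by (intro convex_onI convex_Times) (auto simp: convex_on_imp_convex)

lemma linear_imp_concave_on:
  assumes "linear f" "convex S"
  shows "concave_on S f"
  using assms by (simp add: concave_on_iff linear_add linear_scale)

lemma fdom_Times_max_sublevel:
  fixes f :: "'x::real_normed_vector \<Rightarrow> ereal" and g :: "'y::real_normed_vector \<Rightarrow> ereal" and a b :: real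
  assumes fcv: "convex_fun f" and gcv: "convex_fun g" and flsc: "lsc_fun f" and glsc: "lsc_fun g"
    and fnm: "\<And>p. f p \<noteq> -\<infinity>" and gnm: "\<And>q. g q \<noteq> -\<infinity>"
  defines "\<phi> \<equiv> \<lambda>w. max (real_of_ereal (f (fst w)) - a) (real_of_ereal (g (snd w)) - b)"
  shows "convex_on (fdom f \<times> fdom g) \<phi>" and "closed {w \<in> fdom f \<times> fdom g. \<phi> w \<le> c}"
proof -
  have cf: "convex_on (fdom f) (\<lambda>z. real_of_ereal (f z))" and cg: "convex_on (fdom g) (\<lambda>z. real_of_ereal (g z))"
    using fcv gcv fnm gnm convex_on_fdom by blast+
  then have "convex (fdom f)" "convex (fdom g)" using convex_on_imp_convex by blast+
  then show "convex_on (fdom f \<times> fdom g) \<phi>" unfolding \<phi>_def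
    by (intro convex_on_max convex_on_diff convex_on_Times_fst[OF cf] convex_on_Times_snd[OF _ cg])
       (simp_all add: concave_on_const convex_Times)
  have eq: "{w \<in> fdom f \<times> fdom g. \<phi> w \<le> c} = fst -` {p. f p \<le> ereal (a + c)} \<inter> snd -` {q. g q \<le> ereal (b + c)}"
    using fnm gnm by (auto simp: fdom_def \<phi>_def ereal_le_ereal_iff_real[OF fnm] ereal_le_ereal_iff_real[OF gnm])
  have "closed (fst -` {p. f p \<le> ereal (a + c)})" "closed (snd -` {q. g q \<le> ereal (b + c)})"
    using flsc glsc unfolding lsc_fun_def by (simp_all only: closed_vimage_fst closed_vimage_snd)
  then show "closed {w \<in> fdom f \<times> fdom g. \<phi> w \<le> c}" unfolding eq by (rule closed_Int)
qed

section \<open>Partial inf-convolution\<close>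

definition partial_infconv ::
    "('a \<times> 'b \<Rightarrow> ereal) \<Rightarrow> ('a \<times> 'b \<Rightarrow> ereal) \<Rightarrow> 'a \<times> 'b::ab_group_add \<Rightarrow> ereal" where
  "partial_infconv f g p = (INF st \<in> {(s, t). s + t = snd p}. f (fst p, fst st) + g (fst p, snd st))"

lemma partial_infconv_le: "partial_infconv f g (x, s + t) \<le> f (x, s) + g (x, t)"
  unfolding partial_infconv_def by (rule INF_lower2[of "(s, t)"]) auto

lemma partial_infconv_less_imp:
  assumes "partial_infconv f g p < c"
  shows "\<exists>s t. s + t = snd p \<and> f (fst p, s) + g (fst p, t) < c"
  using assms unfolding partial_infconv_def INF_less_iff by auto

lemma qform_le_partial_infconv:
  assumes "\<And>p. ereal (qform p) \<le> f p" and "\<And>p. ereal (qform p) \<le> g p"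
  shows "ereal (qform p) \<le> partial_infconv f g p"
  unfolding partial_infconv_def
proof (rule INF_greatest, clarify)
  fix s t assume "s + t = snd p"
  then have "ereal (qform p) = ereal (qform (fst p, s)) + ereal (qform (fst p, t))"
    by (simp add: qform_def flip: blinfun.add_left)
  also have "\<dots> \<le> f (fst p, s) + g (fst p, t)" by (intro add_mono assms)
  finally show "ereal (qform p) \<le> f (fst p, fst (s, t)) + g (fst p, snd (s, t))" by simp
qed

lemma partial_infconv_convex_combination_le:
  assumes fcv: "convex_fun f" and gcv: "convex_fun g"
    and fnm: "\<And>p. f p \<noteq> -\<infinity>" and gnm: "\<And>p. g p \<noteq> -\<infinity>"
    and dom: "(x1, s1) \<in> fdom f" "(x1, t1) \<in> fdom g" "(x2, s2) \<in> fdom f" "(x2, t2) \<in> fdom g"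
    and l: "0 \<le> l" "l \<le> 1"
  shows "partial_infconv f g ((1-l) *\<^sub>R (x1, s1 + t1) + l *\<^sub>R (x2, s2 + t2))
    \<le> ereal ((1-l) * (real_of_ereal (f (x1, s1)) + real_of_ereal (g (x1, t1)))
             + l * (real_of_ereal (f (x2, s2)) + real_of_ereal (g (x2, t2))))"
proof -
  let ?F = "\<lambda>z. real_of_ereal (f z)" and ?G = "\<lambda>z. real_of_ereal (g z)"
  have cf: "convex_on (fdom f) ?F" and cg: "convex_on (fdom g) ?G"
    using convex_on_fdom fcv gcv fnm gnm by blast+
  define x where "x = (1-l) *\<^sub>R x1 + l *\<^sub>R x2"
  define s where "s = (1-l) *\<^sub>R s1 + l *\<^sub>R s2"
  define t where "t = (1-l) *\<^sub>R t1 + l *\<^sub>R t2"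
  have xs: "(x, s) = (1-l) *\<^sub>R (x1, s1) + l *\<^sub>R (x2, s2)"
    and xt: "(x, t) = (1-l) *\<^sub>R (x1, t1) + l *\<^sub>R (x2, t2)"
    by (simp_all add: x_def s_def t_def)
  have "(1-l) *\<^sub>R (x1, s1 + t1) + l *\<^sub>R (x2, s2 + t2) = (x, s + t)"
    by (simp add: x_def s_def t_def algebra_simps)
  then have "partial_infconv f g ((1-l) *\<^sub>R (x1, s1 + t1) + l *\<^sub>R (x2, s2 + t2)) \<le> f (x, s) + g (x, t)"
    by (simp add: partial_infconv_le)
  also have "\<dots> = ereal (?F (x, s) + ?G (x, t))"
  proof -
    have "(x, s) \<in> fdom f" unfolding xs
      by (rule convexD_alt[OF convex_on_imp_convex[OF cf] dom(1,3) l])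
    moreover have "(x, t) \<in> fdom g" unfolding xt
      by (rule convexD_alt[OF convex_on_imp_convex[OF cg] dom(2,4) l])
    ultimately show ?thesis by (cases "f (x, s)"; cases "g (x, t)") (auto simp: fdom_def)
  qed
  also have "?F (x, s) + ?G (x, t) \<le> (1-l) * (?F (x1, s1) + ?G (x1, t1)) + l * (?F (x2, s2) + ?G (x2, t2))"
    using convex_onD[OF cf l dom(1,3)] convex_onD[OF cg l dom(2,4)] unfolding xs xt
    by (simp add: algebra_simps)
  finally show ?thesis by simp
qed

lemma convex_fun_partial_infconv:
  assumes fcv: "convex_fun f" and gcv: "convex_fun g"
    and fnm: "\<And>p. f p \<noteq> -\<infinity>" and gnm: "\<And>p. g p \<noteq> -\<infinity>"
    and hnm: "\<And>p. partial_infconv f g p \<noteq> -\<infinity>"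
  shows "convex_fun (partial_infconv f g)"
  unfolding convex_fun_def
proof (intro allI impI)
  let ?h = "partial_infconv f g"
  fix p1 p2 and l :: real assume l: "0 < l" "l < 1"
  show "?h ((1 - l) *\<^sub>R p1 + l *\<^sub>R p2) \<le> ereal (1 - l) * ?h p1 + ereal l * ?h p2"
  proof (cases "?h p1 = \<infinity> \<or> ?h p2 = \<infinity>")
    case True
    then have "ereal (1 - l) * ?h p1 + ereal l * ?h p2 = \<infinity>"
      using l hnm[of p1] hnm[of p2] by (cases "?h p1"; cases "?h p2") auto
    then show ?thesis by (metis top_ereal_def top_greatest)
  next
    case False
    then obtain H1 H2 where H1: "?h p1 = ereal H1" and H2: "?h p2 = ereal H2"
      using hnm[of p1] hnm[of p2] by (cases "?h p1"; cases "?h p2") auto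
    have "?h ((1 - l) *\<^sub>R p1 + l *\<^sub>R p2) \<le> ereal ((1-l) * H1 + l * H2) + ereal e" if e: "e > 0" for e
    proof -
      obtain s1 t1 where st1: "s1 + t1 = snd p1" "f (fst p1, s1) + g (fst p1, t1) < ereal (H1 + e)"
        using partial_infconv_less_imp[of f g p1 "ereal (H1 + e)"] H1 e by auto
      obtain s2 t2 where st2: "s2 + t2 = snd p2" "f (fst p2, s2) + g (fst p2, t2) < ereal (H2 + e)"
        using partial_infconv_less_imp[of f g p2 "ereal (H2 + e)"] H2 e by auto
      let ?F = "\<lambda>z. real_of_ereal (f z)" and ?G = "\<lambda>z. real_of_ereal (g z)"
      have dom: "(fst p1, s1) \<in> fdom f" "(fst p1, t1) \<in> fdom g" "(fst p2, s2) \<in> fdom f" "(fst p2, t2) \<in> fdom g"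
        using st1(2) st2(2) fnm gnm by (auto simp: fdom_def)
      have "?F (fst p1, s1) + ?G (fst p1, t1) < H1 + e"
        using st1(2) dom by (cases "f (fst p1, s1)"; cases "g (fst p1, t1)") (auto simp: fdom_def)
      moreover have "?F (fst p2, s2) + ?G (fst p2, t2) < H2 + e"
        using st2(2) dom by (cases "f (fst p2, s2)"; cases "g (fst p2, t2)") (auto simp: fdom_def)
      ultimately have "(1-l) * (?F (fst p1, s1) + ?G (fst p1, t1)) + l * (?F (fst p2, s2) + ?G (fst p2, t2))
          \<le> (1-l) * (H1 + e) + l * (H2 + e)"
        using l by (intro add_mono[OF mult_left_mono mult_left_mono]) auto
      also have "\<dots> = ((1-l) * H1 + l * H2) + e" by (simp add: algebra_simps)
      finally have bound: "(1-l) * (?F (fst p1, s1) + ?G (fst p1, t1)) + l * (?F (fst p2, s2) + ?G (fst p2, t2))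
          \<le> ((1-l) * H1 + l * H2) + e" .
      have "(1 - l) *\<^sub>R p1 + l *\<^sub>R p2 = (1-l) *\<^sub>R (fst p1, s1 + t1) + l *\<^sub>R (fst p2, s2 + t2)"
        using st1(1) st2(1) by (metis prod.collapse)
      then have "?h ((1 - l) *\<^sub>R p1 + l *\<^sub>R p2)
          \<le> ereal ((1-l) * (?F (fst p1, s1) + ?G (fst p1, t1)) + l * (?F (fst p2, s2) + ?G (fst p2, t2)))"
        using partial_infconv_convex_combination_le[OF fcv gcv fnm gnm dom, of l] l by simp
      also have "\<dots> \<le> ereal ((1-l) * H1 + l * H2) + ereal e" using bound by simp
      finally show ?thesis .
    qed
    then have "?h ((1 - l) *\<^sub>R p1 + l *\<^sub>R p2) \<le> ereal ((1-l) * H1 + l * H2)"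
      by (rule ereal_le_epsilon2)
    then show ?thesis using H1 H2 by simp
  qed
qed

lemma fconj_partial_infconv_le:
  fixes f g :: "'a::banach \<times> ('a \<Rightarrow>\<^sub>L real) \<Rightarrow> ereal"
  assumes fnm: "\<And>p. f p \<noteq> -\<infinity>" and gnm: "\<And>p. g p \<noteq> -\<infinity>"
    and ff: "\<And>p. fconj f p \<noteq> -\<infinity>" and gg: "\<And>p. fconj g p \<noteq> -\<infinity>"
  shows "fconj (partial_infconv f g) (y, u + v) \<le> fconj f (y, u) + fconj g (y, v)"
proof (cases "fconj f (y, u) = \<infinity> \<or> fconj g (y, v) = \<infinity>")
  case True
  then show ?thesis using ff[of "(y,u)"] gg[of "(y,v)"] by auto
next
  case False
  then obtain F G where F: "fconj f (y, u) = ereal F" and G: "fconj g (y, v) = ereal G"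
    using ff[of "(y,u)"] gg[of "(y,v)"] by (cases "fconj f (y, u)"; cases "fconj g (y, v)") auto
  show ?thesis unfolding fconj_def[of "partial_infconv f g"]
  proof (rule SUP_least)
    fix p :: "'a \<times> ('a \<Rightarrow>\<^sub>L real)"
    have "ereal (bpair p (y, u + v) - (F + G)) \<le> partial_infconv f g p"
      unfolding partial_infconv_def
    proof (rule INF_greatest, clarify)
      fix s t assume st: "s + t = snd p"
      show "ereal (bpair p (y, u + v) - (F + G)) \<le> f (fst p, fst (s, t)) + g (fst p, snd (s, t))"
      proof (cases "f (fst p, s) = \<infinity> \<or> g (fst p, t) = \<infinity>")
        case True then show ?thesis using fnm[of "(fst p, s)"] gnm[of "(fst p, t)"] by auto
      next
        case False
        then obtain a b where a: "f (fst p, s) = ereal a" and b: "g (fst p, t) = ereal b"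
          using fnm[of "(fst p, s)"] gnm[of "(fst p, t)"] by (cases "f (fst p, s)"; cases "g (fst p, t)") auto
        have "ereal (bpair (fst p, s) (y, u)) - f (fst p, s) \<le> fconj f (y, u)"
          unfolding fconj_def by (rule SUP_upper) simp
        then have 1: "bpair (fst p, s) (y, u) - a \<le> F" using a F by simp
        have "ereal (bpair (fst p, t) (y, v)) - g (fst p, t) \<le> fconj g (y, v)"
          unfolding fconj_def by (rule SUP_upper) simp
        then have 2: "bpair (fst p, t) (y, v) - b \<le> G" using b G by simp
        have "bpair p (y, u + v) = bpair (fst p, s) (y, u) + bpair (fst p, t) (y, v)"
          using st[symmetric] by (simp add: bpair_def blinfun.add_left)
        then show ?thesis using 1 2 a b by simp
      qed
    qed
    then show "ereal (bpair p (y, u + v)) - partial_infconv f g p \<le> fconj f (y, u) + fconj g (y, v)"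
      unfolding F G by (cases "partial_infconv f g p") auto
  qed
qed

lemma le_of_le_plus_small_multiples:
  fixes a q b :: real
  assumes "\<And>l. 0 < l \<Longrightarrow> l < 1 \<Longrightarrow> a + l * q \<le> b"
  shows "a \<le> b"
proof (rule tendsto_upperbound)
  show "((\<lambda>l. a + l * q) \<longlongrightarrow> a) (at_right 0)" by (auto intro!: tendsto_eq_intros)
  show "\<forall>\<^sub>F l in at_right 0. a + l * q \<le> b"
    unfolding eventually_at_right[OF zero_less_one] using assms zero_less_one by blast
qed simp

text \<open>If a convex \<open>k \<ge> q\<close> touches \<open>q\<close> at \<open>p\<close>, then along every segment from \<open>p\<close> the
  quadratic \<open>q\<close> has to stay below \<open>k\<close>; comparing first-order terms gives \<open>k\<^sup>@(p) \<le> q(p)\<close>.\<close>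

lemma fconj_le_qform_if_touching:
  fixes k :: "'a::banach \<times> ('a \<Rightarrow>\<^sub>L real) \<Rightarrow> ereal"
  assumes cv: "convex_fun k" and kq: "\<And>p. k p \<ge> ereal (qform p)" and kp: "k p = ereal (qform p)"
  shows "fconj k p \<le> ereal (qform p)"
  unfolding fconj_def
proof (rule SUP_least)
  fix r
  show "ereal (bpair r p) - k r \<le> ereal (qform p)"
  proof (cases "k r")
    case (real b)
    define d where "d = r - p"
    have "qform p + bpair p d + l * qform d \<le> b" if l: "0 < l" "l < 1" for l
    proof -
      have "ereal (qform ((1-l) *\<^sub>R p + l *\<^sub>R r)) \<le> k ((1-l) *\<^sub>R p + l *\<^sub>R r)" by (rule kq)
      also have "\<dots> \<le> ereal (1-l) * k p + ereal l * k r"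
        using cv l unfolding convex_fun_def by blast
      also have "\<dots> = ereal ((1-l) * qform p + l * b)" using kp real by simp
      finally have "qform (p + l *\<^sub>R d) \<le> (1-l) * qform p + l * b"
        by (simp add: d_def algebra_simps)
      moreover have "qform (p + l *\<^sub>R d) = qform p + l * bpair p d + l * l * qform d"
        by (simp add: qform_def bpair_def blinfun.add_left blinfun.add_right
                      blinfun.scaleR_left blinfun.scaleR_right algebra_simps)
      ultimately have "l * (qform p + bpair p d + l * qform d) \<le> l * b" by (simp add: algebra_simps)
      then show ?thesis using l by simp
    qed
    then have "qform p + bpair p d \<le> b" by (rule le_of_le_plus_small_multiples)
    moreover have "bpair r p = bpair p d + 2 * qform p"
      by (simp add: d_def bpair_def qform_def blinfun.diff_left blinfun.diff_right)
    ultimately show ?thesis using real by simp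
  qed (use kq[of r] in auto)
qed

lemma ereal_SUP_add_SUP_le:
  fixes A :: "'i \<Rightarrow> ereal" and B :: "'j \<Rightarrow> ereal"
  assumes le: "\<And>i j. A i + B j \<le> ereal M" and A: "A i0 \<noteq> -\<infinity>" and B: "B j0 \<noteq> -\<infinity>"
  shows "(SUP i. A i) + (SUP j. B j) \<le> ereal M"
proof -
  have "(SUP i. A i) + B j0 \<le> ereal M" by (rule SUP_ereal_le_addI[OF le B])
  moreover have "A i0 \<le> (SUP i. A i)" by (rule SUP_upper) simp
  ultimately obtain S where S: "(SUP i. A i) = ereal S"
    using A B by (cases "SUP i. A i"; cases "A i0"; cases "B j0") auto
  have "B j + ereal S \<le> ereal M" for j
  proof (cases "B j = -\<infinity>")
    case False
    then have "(SUP i. A i) + B j \<le> ereal M" by (rule SUP_ereal_le_addI[OF le])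
    then show ?thesis using S by (simp add: add.commute)
  qed simp
  then have "(SUP j. B j) + ereal S \<le> ereal M" by (rule SUP_ereal_le_addI) simp
  then show ?thesis using S by (simp add: add.commute)
qed

lemma fconj_ge: "ereal (bpair p r) - k p \<le> fconj k r"
  unfolding fconj_def by (rule SUP_upper) simp

text \<open>For \<open>w = ((x, s), (x', t))\<close> the coupling is \<open>s(y) + t(y) + y\<^sup>*(x')\<close>; on the diagonal
  \<open>x = x'\<close> it is the pairing of \<open>(x, s + t)\<close> with \<open>(y, y\<^sup>*)\<close>, and \<open>split_gap\<close> is the
  function \<open>\<psi>\<close> of the proof sketch.\<close>

definition split_coupling :: "'a::banach \<Rightarrow> ('a \<Rightarrow>\<^sub>L real) \<Rightarrow>
    ('a \<times> ('a \<Rightarrow>\<^sub>L real)) \<times> ('a \<times> ('a \<Rightarrow>\<^sub>L real)) \<Rightarrow> real" where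
  "split_coupling y ys w = snd (fst w) y + snd (snd w) y + ys (fst (snd w))"

lemma linear_split_coupling: "linear (split_coupling y ys)"
  by (rule linearI) (simp_all add: split_coupling_def blinfun.add_left blinfun.scaleR_left
      blinfun.add_right blinfun.scaleR_right algebra_simps)

lemma split_coupling_bound: "\<bar>split_coupling y ys w\<bar> \<le> norm w * (2 * norm y + norm ys)"
proof -
  have fst: "norm (fst p) \<le> norm p" and snd: "norm (snd p) \<le> norm p" for p :: "'c::real_normed_vector \<times> 'd::real_normed_vector"
    using norm_fst_le[of "fst p" "snd p"] norm_snd_le[of "snd p" "fst p"] by simp_all
  have n: "norm (snd (fst w)) \<le> norm w" "norm (snd (snd w)) \<le> norm w" "norm (fst (snd w)) \<le> norm w"
    using order_trans[OF snd fst] order_trans[OF snd snd] order_trans[OF fst snd] by blast+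
  have bl: "\<bar>F x\<bar> \<le> B * norm x" if "norm F \<le> B" for F :: "'a \<Rightarrow>\<^sub>L real" and x B
    using norm_blinfun[of F x] that by (simp add: mult_right_mono order_trans)
  have "\<bar>snd (fst w) y\<bar> \<le> norm w * norm y" "\<bar>snd (snd w) y\<bar> \<le> norm w * norm y"
    using bl n by auto
  moreover have "\<bar>ys (fst (snd w))\<bar> \<le> norm w * norm ys"
  proof -
    have "norm ys * norm (fst (snd w)) \<le> norm ys * norm w" using n(3) by (simp add: mult_left_mono)
    then show ?thesis using norm_blinfun[of ys "fst (snd w)"] by (simp add: mult.commute)
  qed
  ultimately show ?thesis unfolding split_coupling_def by (simp add: algebra_simps)
qed

definition split_gap :: "('a::banach \<times> ('a \<Rightarrow>\<^sub>L real) \<Rightarrow> ereal) \<Rightarrow> ('a \<times> ('a \<Rightarrow>\<^sub>L real) \<Rightarrow> ereal) \<Rightarrow>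
    'a \<Rightarrow> ('a \<Rightarrow>\<^sub>L real) \<Rightarrow> real \<Rightarrow> ('a \<times> ('a \<Rightarrow>\<^sub>L real)) \<times> ('a \<times> ('a \<Rightarrow>\<^sub>L real)) \<Rightarrow> real" where
  "split_gap f g y ys M w =
     M + real_of_ereal (f (fst w)) + real_of_ereal (g (snd w)) - split_coupling y ys w"

lemma split_gap_le_near:
  assumes "norm (w - w0) \<le> 1" and "real_of_ereal (f (fst w)) \<le> real_of_ereal (f (fst w0)) + 1"
    and "real_of_ereal (g (snd w)) \<le> real_of_ereal (g (snd w0)) + 1"
  shows "split_gap f g y ys M w \<le> M + (real_of_ereal (f (fst w0)) + 1) + (real_of_ereal (g (snd w0)) + 1)
           + (norm w0 + 1) * (2 * norm y + norm ys)"
proof -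
  have "norm w \<le> norm w0 + 1" using assms(1) norm_triangle_sub[of w w0] by linarith
  then have "norm w * (2 * norm y + norm ys) \<le> (norm w0 + 1) * (2 * norm y + norm ys)"
    by (rule mult_right_mono) simp
  then have "- split_coupling y ys w \<le> (norm w0 + 1) * (2 * norm y + norm ys)"
    using split_coupling_bound[of y ys w] by linarith
  then show ?thesis using assms(2,3) by (simp add: split_gap_def)
qed

lemma convex_on_split_gap:
  assumes "convex_fun f" "convex_fun g" "\<And>p. f p \<noteq> -\<infinity>" "\<And>p. g p \<noteq> -\<infinity>"
  shows "convex_on (fdom f \<times> fdom g) (split_gap f g y ys M)"
proof -
  have cf: "convex_on (fdom f) (\<lambda>z. real_of_ereal (f z))" and cg: "convex_on (fdom g) (\<lambda>z. real_of_ereal (g z))"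
    using assms convex_on_fdom by blast+
  have cvf: "convex (fdom f)" and cvg: "convex (fdom g)" using cf cg convex_on_imp_convex by blast+
  then have cW: "convex (fdom f \<times> fdom g)" by (rule convex_Times)
  have "convex_on (fdom f \<times> fdom g) (\<lambda>w. M + real_of_ereal (f (fst w)) + real_of_ereal (g (snd w)))"
    using cW convex_on_Times_fst[OF cf cvg] convex_on_Times_snd[OF cvf cg]
    by (intro convex_on_add) (simp_all add: convex_on_const)
  then show ?thesis
    unfolding split_gap_def
    by (rule convex_on_diff) (rule linear_imp_concave_on[OF linear_split_coupling cW])
qed

text \<open>On the diagonal \<open>fst p = fst q\<close> the gap is nonnegative because \<open>M\<close> dominates
  \<open>h\<^sup>@(y, y\<^sup>*)\<close>, and \<open>h(x, s + t) \<le> f(x, s) + g(x, t)\<close>.\<close>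

lemma split_gap_nonneg_on_diagonal:
  assumes M: "fconj (partial_infconv f g) (y, ys) \<le> ereal M"
    and pq: "p \<in> fdom f" "q \<in> fdom g" "fst p = fst q"
  shows "0 \<le> split_gap f g y ys M (p, q)"
proof -
  obtain x s t where p: "p = (x, s)" and q: "q = (x, t)" using pq(3) by (metis prod.collapse)
  obtain a b where a: "f p = ereal a" and b: "g q = ereal b"
    using pq(1,2) by (cases "f p"; cases "g q") (auto simp: fdom_def)
  have "ereal (bpair (x, s + t) (y, ys)) - partial_infconv f g (x, s + t) \<le> ereal M"
    using M unfolding fconj_def by (meson SUP_upper UNIV_I order_trans)
  moreover have "partial_infconv f g (x, s + t) \<le> ereal (a + b)"
    using partial_infconv_le[of f g x s t] a b p q by simp
  ultimately have "bpair (x, s + t) (y, ys) - (a + b) \<le> M"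
    by (cases "partial_infconv f g (x, s + t)") auto
  then show ?thesis
    using a b p q by (simp add: split_gap_def split_coupling_def bpair_def blinfun.add_left)
qed

lemma fconj_partial_infconv_neq_MInf:
  assumes "(x, s) \<in> fdom f" "(x, t) \<in> fdom g"
  shows "fconj (partial_infconv f g) r \<noteq> -\<infinity>"
proof -
  have "partial_infconv f g (x, s + t) \<noteq> \<infinity>"
    using assms partial_infconv_le[of f g x s t] by (auto simp: fdom_def)
  then show ?thesis using fconj_ge[of "(x, s + t)" r "partial_infconv f g"]
    by (cases "partial_infconv f g (x, s + t)") auto
qed

lemma fconj_add_le_of_split_gap_minorant:
  fixes u :: "'a::banach \<Rightarrow>\<^sub>L real"
  assumes fnm: "\<And>p. f p \<noteq> -\<infinity>" and gnm: "\<And>q. g q \<noteq> -\<infinity>"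
    and p0: "p0 \<in> fdom f" and q0: "q0 \<in> fdom g"
    and minor: "\<And>p q. p \<in> fdom f \<Longrightarrow> q \<in> fdom g \<Longrightarrow> u (fst p - fst q) \<le> split_gap f g y ys M (p, q)"
  shows "fconj f (y, u) + fconj g (y, ys - u) \<le> ereal M"
  unfolding fconj_def
proof (rule ereal_SUP_add_SUP_le)
  fix p q
  show "ereal (bpair p (y, u)) - f p + (ereal (bpair q (y, ys - u)) - g q) \<le> ereal M"
  proof (cases "p \<in> fdom f \<and> q \<in> fdom g")
    case True
    then obtain a b where a: "f p = ereal a" and b: "g q = ereal b"
      by (cases "f p"; cases "g q") (auto simp: fdom_def)
    show ?thesis
      using minor[of p q] True a b
      by (simp add: split_gap_def split_coupling_def bpair_def blinfun.diff_left blinfun.diff_right)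
  next
    case False
    then have "f p = \<infinity> \<or> g q = \<infinity>" using fnm gnm by (auto simp: fdom_def)
    then show ?thesis using fnm[of p] gnm[of q] by (cases "f p"; cases "g q") auto
  qed
next
  show "ereal (bpair p0 (y, u)) - f p0 \<noteq> -\<infinity>" using p0 by (cases "f p0") (auto simp: fdom_def)
  show "ereal (bpair q0 (y, ys - u)) - g q0 \<noteq> -\<infinity>" using q0 by (cases "g q0") (auto simp: fdom_def)
qed

lemma fdom_difference_cone:
  fixes f g :: "'a::real_vector \<times> 'b \<Rightarrow> ereal"
  assumes "Y = (\<Union>c\<in>{0::real<..}. (\<lambda>v. c *\<^sub>R v) ` {a - b | a b. a \<in> fst ` fdom f \<and> b \<in> fst ` fdom g})"
  shows "(\<lambda>w. fst (fst w) - fst (snd w)) ` (fdom f \<times> fdom g) \<subseteq> Y"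
    and "z \<in> Y \<Longrightarrow> \<exists>c>0. \<exists>w\<in>fdom f \<times> fdom g. z = c *\<^sub>R (fst (fst w) - fst (snd w))"
proof -
  have LW: "(\<lambda>w. fst (fst w) - fst (snd w)) ` (fdom f \<times> fdom g) = {a - b | a b. a \<in> fst ` fdom f \<and> b \<in> fst ` fdom g}"
  proof (intro equalityI subsetI)
    fix z assume "z \<in> (\<lambda>w. fst (fst w) - fst (snd w)) ` (fdom f \<times> fdom g)"
    then obtain p q where "p \<in> fdom f" "q \<in> fdom g" "z = fst p - fst q" by auto
    then show "z \<in> {a - b | a b. a \<in> fst ` fdom f \<and> b \<in> fst ` fdom g}" by blast
  next
    fix z assume "z \<in> {a - b | a b. a \<in> fst ` fdom f \<and> b \<in> fst ` fdom g}"
    then obtain p q where "p \<in> fdom f" "q \<in> fdom g" "z = fst p - fst q" by blast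
    then show "z \<in> (\<lambda>w. fst (fst w) - fst (snd w)) ` (fdom f \<times> fdom g)" by force
  qed
  then have Y: "Y = (\<Union>c\<in>{0::real<..}. (\<lambda>v. c *\<^sub>R v) ` ((\<lambda>w. fst (fst w) - fst (snd w)) ` (fdom f \<times> fdom g)))"
    using assms by simp
  show "(\<lambda>w. fst (fst w) - fst (snd w)) ` (fdom f \<times> fdom g) \<subseteq> Y"
  proof
    fix z assume "z \<in> (\<lambda>w. fst (fst w) - fst (snd w)) ` (fdom f \<times> fdom g)"
    then show "z \<in> Y" unfolding Y by (intro UN_I[of 1] image_eqI[where x = z]) auto
  qed
  show "\<exists>c>0. \<exists>w\<in>fdom f \<times> fdom g. z = c *\<^sub>R (fst (fst w) - fst (snd w))" if "z \<in> Y"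
    using that unfolding Y by blast
qed

lemma fconj_partial_infconv_split:
  fixes f g :: "'a::banach \<times> ('a \<Rightarrow>\<^sub>L real) \<Rightarrow> ereal"
  assumes fcv: "convex_fun f" and gcv: "convex_fun g" and flsc: "lsc_fun f" and glsc: "lsc_fun g"
    and fnm: "\<And>p. f p \<noteq> -\<infinity>" and gnm: "\<And>p. g p \<noteq> -\<infinity>"
    and Ysub: "subspace Y" and Ycl: "closed Y"
    and Ydef: "Y = (\<Union>c\<in>{0::real<..}. (\<lambda>v. c *\<^sub>R v) ` {a - b | a b. a \<in> fst ` fdom f \<and> b \<in> fst ` fdom g})"
  shows "\<exists>u. fconj f (y, u) + fconj g (y, ys - u) \<le> fconj (partial_infconv f g) (y, ys)"
proof -
  define W where "W = fdom f \<times> fdom g"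
  define L where "L w = fst (fst w) - fst (snd w)" for w :: "('a \<times> ('a \<Rightarrow>\<^sub>L real)) \<times> ('a \<times> ('a \<Rightarrow>\<^sub>L real))"
  have L: "bounded_linear L"
    unfolding L_def
    by (intro bounded_linear_sub bounded_linear_compose[OF bounded_linear_fst bounded_linear_fst]
        bounded_linear_compose[OF bounded_linear_fst bounded_linear_snd])
  have LWY: "L ` W \<subseteq> Y" and cone: "\<And>z. z \<in> Y \<Longrightarrow> \<exists>c>0. \<exists>w\<in>W. z = c *\<^sub>R L w"
    using fdom_difference_cone[OF Ydef] unfolding W_def L_def by blast+
  obtain c w0 where "c > 0" "w0 \<in> W" "0 = c *\<^sub>R L w0" using cone[OF subspace_0[OF Ysub]] by blast
  then have w0: "w0 \<in> W" "L w0 = 0" by simp_all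
  then have dom0: "fst w0 \<in> fdom f" "snd w0 \<in> fdom g" "fst (fst w0) = fst (snd w0)"
    by (auto simp: W_def L_def)
  show ?thesis
  proof (cases "fconj (partial_infconv f g) (y, ys)")
    case PInf then show ?thesis by simp
  next
    case MInf
    then show ?thesis using fconj_partial_infconv_neq_MInf[of _ _ f _ g] dom0 by (metis prod.collapse)
  next
    case (real M)
    define \<phi> where "\<phi> w = max (real_of_ereal (f (fst w)) - real_of_ereal (f (fst w0)))
                                (real_of_ereal (g (snd w)) - real_of_ereal (g (snd w0)))" for w
    have "\<exists>r>0. \<forall>z\<in>Y. norm z < r \<longrightarrow> (\<exists>w\<in>W. L w = z \<and> norm (w - w0) \<le> 1 \<and> \<phi> w \<le> \<phi> w0 + 1)"
      using fdom_Times_max_sublevel[OF fcv gcv flsc glsc fnm gnm] unfolding W_def \<phi>_def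
      by (intro convex_sublevel_linear_image_contains_ball[OF L _ _ w0[unfolded W_def] Ycl Ysub
            LWY[unfolded W_def] cone[unfolded W_def]])
    then obtain r where r: "r > 0"
      "\<forall>z\<in>Y. norm z < r \<longrightarrow> (\<exists>w\<in>W. L w = z \<and> norm (w - w0) \<le> 1 \<and> \<phi> w \<le> \<phi> w0 + 1)"
      by blast
    then have ball: "\<exists>w\<in>W. L w = z \<and> split_gap f g y ys M w \<le>
        M + (real_of_ereal (f (fst w0)) + 1) + (real_of_ereal (g (snd w0)) + 1) + (norm w0 + 1) * (2 * norm y + norm ys)"
      if "z \<in> Y" "norm z < r" for z
      using that split_gap_le_near[of _ w0 f g y ys M] by (fastforce simp: \<phi>_def)
    have gap: "convex_on W (split_gap f g y ys M)"
      unfolding W_def by (rule convex_on_split_gap[OF fcv gcv fnm gnm])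
    have ker: "0 \<le> split_gap f g y ys M w" if "w \<in> W" "L w = 0" for w
      using that split_gap_nonneg_on_diagonal[of f g y ys M "fst w" "snd w"] real
      by (simp add: W_def L_def mem_Times_iff)
    obtain K where "K \<ge> 0" "\<And>w. w \<in> W \<Longrightarrow> - K * norm (L w) \<le> split_gap f g y ys M w"
      using convex_on_nonneg_on_kernel_imp_norm_bound[OF gap bounded_linear.linear[OF L] Ysub LWY r(1) ball ker]
      by blast
    then obtain u where u: "bounded_linear u" "\<And>w. w \<in> W \<Longrightarrow> u (L w) \<le> split_gap f g y ys M w"
      using convex_on_linear_minorant[OF gap bounded_linear.linear[OF L]] w0(1) by blast
    have minor: "Blinfun u (fst p - fst q) \<le> split_gap f g y ys M (p, q)" if "p \<in> fdom f" "q \<in> fdom g" for p q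
      using u(2)[of "(p, q)"] that by (simp add: W_def L_def bounded_linear_Blinfun_apply[OF u(1)])
    from fconj_add_le_of_split_gap_minorant[of f g, OF fnm gnm dom0(1,2) minor]
    show ?thesis unfolding real by blast
  qed
qed

lemma BC_funD:
  assumes "BC_fun k"
  shows "ereal (qform p) \<le> k p" and "k p \<le> fconj k p" and "k p \<noteq> -\<infinity>" and "fconj k p \<noteq> -\<infinity>"
  using assms unfolding BC_fun_def by (metis MInfty_neq_ereal(1) order_trans ereal_infty_less_eq(2))+

lemma fconj_partial_infconv_decompose:
  fixes f g :: "'a::banach \<times> ('a \<Rightarrow>\<^sub>L real) \<Rightarrow> ereal"
  assumes fBC: "BC_fun f" and gBC: "BC_fun g" and "lsc_fun f" "lsc_fun g"
    and "subspace Y" "closed Y"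
    and "Y = (\<Union>c\<in>{0::real<..}. (\<lambda>v. c *\<^sub>R v) ` {a - b | a b. a \<in> fst ` fdom f \<and> b \<in> fst ` fdom g})"
  shows "\<exists>u. fconj (partial_infconv f g) (y, ys) = fconj f (y, u) + fconj g (y, ys - u)"
proof -
  have cv: "convex_fun f" "convex_fun g" using fBC gBC by (simp_all add: BC_fun_def)
  obtain u where "fconj f (y, u) + fconj g (y, ys - u) \<le> fconj (partial_infconv f g) (y, ys)"
    using fconj_partial_infconv_split[OF cv assms(3,4) BC_funD(3)[OF fBC] BC_funD(3)[OF gBC] assms(5-7)] by blast
  moreover have "fconj (partial_infconv f g) (y, u + (ys - u)) \<le> fconj f (y, u) + fconj g (y, ys - u)"
    using fBC gBC by (intro fconj_partial_infconv_le BC_funD)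
  ultimately show ?thesis by (intro exI[of _ u]) simp
qed

context
  fixes f g :: "'a::banach \<times> ('a \<Rightarrow>\<^sub>L real) \<Rightarrow> ereal"
  assumes fBC: "BC_fun f" and gBC: "BC_fun g"
    and decomp: "\<And>y ys. \<exists>u. fconj (partial_infconv f g) (y, ys) = fconj f (y, u) + fconj g (y, ys - u)"
begin

lemma BC_fun_partial_infconv:
  assumes "x \<in> fst ` fdom f" "x \<in> fst ` fdom g"
  shows "BC_fun (partial_infconv f g)"
proof -
  let ?h = "partial_infconv f g"
  have hq: "ereal (qform p) \<le> ?h p" for p
    using BC_funD(1)[OF fBC] BC_funD(1)[OF gBC] by (rule qform_le_partial_infconv)
  obtain s t where "f (x, s) \<noteq> \<infinity>" "g (x, t) \<noteq> \<infinity>" using assms by (auto simp: fdom_def)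
  then have "?h (x, s + t) \<noteq> \<infinity>"
    using partial_infconv_le[of f g x s t] BC_funD(3)[OF fBC, of "(x, s)"] BC_funD(3)[OF gBC, of "(x, t)"]
    by (cases "f (x, s)"; cases "g (x, t)") auto
  then have "proper_fun ?h" using hq unfolding proper_fun_def by (metis MInfty_neq_ereal(1) ereal_infty_less_eq(2))
  moreover have "convex_fun ?h"
  proof (rule convex_fun_partial_infconv)
    show "convex_fun f" "convex_fun g" using fBC gBC by (simp_all add: BC_fun_def)
    show "f p \<noteq> -\<infinity>" "g p \<noteq> -\<infinity>" for p using fBC gBC by (simp_all add: BC_funD(3))
    show "?h p \<noteq> -\<infinity>" for p using hq[of p] by auto
  qed
  moreover have "?h p \<le> fconj ?h p" for p
  proof -
    obtain y ys where p: "p = (y, ys)" by (cases p)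
    obtain u where u: "fconj ?h (y, ys) = fconj f (y, u) + fconj g (y, ys - u)" using decomp by blast
    have "?h (y, u + (ys - u)) \<le> f (y, u) + g (y, ys - u)" by (rule partial_infconv_le)
    also have "\<dots> \<le> fconj f (y, u) + fconj g (y, ys - u)" using fBC gBC by (intro add_mono BC_funD)
    finally show ?thesis using u p by simp
  qed
  ultimately show ?thesis using hq by (simp add: BC_fun_def)
qed

lemma Pq_fconj_partial_infconv:
  "Pq (fconj (partial_infconv f g)) = {(x, s + t) | x s t. (x, s) \<in> Pq (fconj f) \<and> (x, t) \<in> Pq (fconj g)}"
proof (intro set_eqI iffI)
  fix p assume "p \<in> Pq (fconj (partial_infconv f g))"
  then have pq: "fconj (partial_infconv f g) p = ereal (qform p)" by (simp add: Pq_def)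
  obtain y ys where p: "p = (y, ys)" by (cases p)
  obtain u where u: "fconj (partial_infconv f g) (y, ys) = fconj f (y, u) + fconj g (y, ys - u)"
    using decomp by blast
  have F: "ereal (qform (y, u)) \<le> fconj f (y, u)" and G: "ereal (qform (y, ys - u)) \<le> fconj g (y, ys - u)"
    using BC_funD(1,2)[OF fBC] BC_funD(1,2)[OF gBC] order_trans by blast+
  have q: "qform (y, ys) = qform (y, u) + qform (y, ys - u)" by (simp add: qform_def blinfun.diff_left)
  have "fconj f (y, u) + fconj g (y, ys - u) = ereal (qform (y, u) + qform (y, ys - u))"
    using u pq p q by simp
  then have "fconj f (y, u) = ereal (qform (y, u)) \<and> fconj g (y, ys - u) = ereal (qform (y, ys - u))"
    using F G by (cases "fconj f (y, u)"; cases "fconj g (y, ys - u)") auto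
  then have "(y, u) \<in> Pq (fconj f)" "(y, ys - u) \<in> Pq (fconj g)" by (simp_all add: Pq_def)
  then show "p \<in> {(x, s + t) | x s t. (x, s) \<in> Pq (fconj f) \<and> (x, t) \<in> Pq (fconj g)}"
    by (intro CollectI exI[of _ y] exI[of _ u] exI[of _ "ys - u"]) (simp add: p)
next
  fix p assume "p \<in> {(x, s + t) | x s t. (x, s) \<in> Pq (fconj f) \<and> (x, t) \<in> Pq (fconj g)}"
  then obtain x s t where p: "p = (x, s + t)" and fs: "fconj f (x, s) = ereal (qform (x, s))"
    and gt: "fconj g (x, t) = ereal (qform (x, t))" by (auto simp: Pq_def)
  have "fconj (partial_infconv f g) (x, s + t) \<le> fconj f (x, s) + fconj g (x, t)"
    using fBC gBC by (intro fconj_partial_infconv_le BC_funD)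
  also have "\<dots> = ereal (qform (x, s + t))" using fs gt by (simp add: qform_def blinfun.add_left)
  finally have upper: "fconj (partial_infconv f g) p \<le> ereal (qform p)" using p by simp
  obtain u where "fconj (partial_infconv f g) p = fconj f (x, u) + fconj g (x, s + t - u)"
    using decomp p by blast
  moreover have "ereal (qform (x, u)) + ereal (qform (x, s + t - u)) \<le> fconj f (x, u) + fconj g (x, s + t - u)"
    using order_trans[OF BC_funD(1,2)[OF fBC]] order_trans[OF BC_funD(1,2)[OF gBC]] by (rule add_mono)
  moreover have "qform p = qform (x, u) + qform (x, s + t - u)"
    using p by (simp add: qform_def blinfun.diff_left)
  ultimately have "ereal (qform p) \<le> fconj (partial_infconv f g) p" by simp
  then show "p \<in> Pq (fconj (partial_infconv f g))" using upper by (simp add: Pq_def)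
qed

end

lemma Pq_partial_infconv:
  fixes f g :: "'a::banach \<times> ('a \<Rightarrow>\<^sub>L real) \<Rightarrow> ereal"
  assumes fBC: "BC_fun f" and gBC: "BC_fun g" and hBC: "BC_fun (partial_infconv f g)"
    and decomp: "\<And>y ys. \<exists>u. fconj (partial_infconv f g) (y, ys) = fconj f (y, u) + fconj g (y, ys - u)"
  shows "Pq (partial_infconv f g) = {(x, s + t) | x s t. (x, s) \<in> Pq f \<and> (x, t) \<in> Pq g}"
proof (intro set_eqI iffI)
  fix p assume "p \<in> Pq (partial_infconv f g)"
  then have "p \<in> Pq (fconj (partial_infconv f g))"
    using fconj_le_qform_if_touching[of "partial_infconv f g" p] hBC BC_funD(1,2)[OF hBC, of p]
    by (auto simp: Pq_def BC_fun_def intro: antisym)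
  then obtain x s t where p: "p = (x, s + t)" and "(x, s) \<in> Pq (fconj f)" "(x, t) \<in> Pq (fconj g)"
    unfolding Pq_fconj_partial_infconv[OF fBC gBC decomp] by blast
  then have "(x, s) \<in> Pq f" "(x, t) \<in> Pq g"
    using BC_funD(1,2)[OF fBC, of "(x, s)"] BC_funD(1,2)[OF gBC, of "(x, t)"]
    by (auto simp: Pq_def intro: antisym)
  then show "p \<in> {(x, s + t) | x s t. (x, s) \<in> Pq f \<and> (x, t) \<in> Pq g}" using p by blast
next
  fix p assume "p \<in> {(x, s + t) | x s t. (x, s) \<in> Pq f \<and> (x, t) \<in> Pq g}"
  then obtain x s t where p: "p = (x, s + t)" and "f (x, s) = ereal (qform (x, s))"
    and "g (x, t) = ereal (qform (x, t))" by (auto simp: Pq_def)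
  then have "partial_infconv f g p \<le> ereal (qform p)"
    using partial_infconv_le[of f g x s t] by (simp add: qform_def blinfun.add_left)
  then show "p \<in> Pq (partial_infconv f g)"
    using BC_funD(1)[OF hBC, of p] by (simp add: Pq_def antisym)
qed

theorem theorem5p3:
  fixes f g :: "'a::banach \<times> ('a \<Rightarrow>\<^sub>L real) \<Rightarrow> ereal"
    and h :: "'a \<times> ('a \<Rightarrow>\<^sub>L real) \<Rightarrow> ereal"
  assumes "\<exists>x::'a. x \<noteq> 0"
    and "reflexive_space TYPE('a)"
    and "proper_fun f" "convex_fun f" "lsc_fun f" "BC_fun f"
    and "proper_fun g" "convex_fun g" "lsc_fun g" "BC_fun g"
    and "subspace (\<Union>c\<in>{0::real<..}. (\<lambda>v. c *\<^sub>R v) `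
            {a - b | a b. a \<in> fst ` fdom f \<and> b \<in> fst ` fdom g})"
    and "closed (\<Union>c\<in>{0::real<..}. (\<lambda>v. c *\<^sub>R v) `
            {a - b | a b. a \<in> fst ` fdom f \<and> b \<in> fst ` fdom g})"
    and "\<And>x xs. h (x, xs) = (INF st \<in> {(s, t). s + t = xs}. f (x, fst st) + g (x, snd st))"
  shows "BC_fun h \<and>
    Pq (fconj h) = {(x, s + t) | x s t. (x, s) \<in> Pq (fconj f) \<and> (x, t) \<in> Pq (fconj g)} \<and>
    Pq h = {(x, s + t) | x s t. (x, s) \<in> Pq f \<and> (x, t) \<in> Pq g}"
proof -
  note fBC = assms(6) and gBC = assms(10)
  have h: "h = partial_infconv f g"
  proof
    fix p show "h p = partial_infconv f g p"
      using assms(13)[of "fst p" "snd p"] by (simp add: partial_infconv_def)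
  qed
  have decomp: "\<exists>u. fconj h (y, ys) = fconj f (y, u) + fconj g (y, ys - u)" for y ys
    unfolding h by (rule fconj_partial_infconv_decompose[OF fBC gBC assms(5,9,11,12) refl])
  from subspace_0[OF assms(11)] obtain c a b where
    "c > 0" "a \<in> fst ` fdom f" "b \<in> fst ` fdom g" "0 = c *\<^sub>R (a - b)"
    by blast
  then have "a \<in> fst ` fdom f" "a \<in> fst ` fdom g" by simp_all
  then have "BC_fun h" unfolding h by (rule BC_fun_partial_infconv[OF fBC gBC decomp[unfolded h]])
  moreover have "Pq (fconj h) = {(x, s + t) | x s t. (x, s) \<in> Pq (fconj f) \<and> (x, t) \<in> Pq (fconj g)}"
    unfolding h by (rule Pq_fconj_partial_infconv[OF fBC gBC decomp[unfolded h]])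
  moreover have "Pq h = {(x, s + t) | x s t. (x, s) \<in> Pq f \<and> (x, t) \<in> Pq g}"
    using \<open>BC_fun h\<close> unfolding h by (rule Pq_partial_infconv[OF fBC gBC _ decomp[unfolded h]])
  ultimately show ?thesis by blast
qed

end
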